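(* Let $\{\mu_t\}_{t\ge0}$ be a weakly continuous $\rhd$-convolution semigroup with $\mu_0=\delta_0$ and associated pair $(\gamma,\tau)$, and assume that the support of each $\mu_t$ is compact. The following are equivalent: (1) there exists $t_0>0$ such that $\mu_{t_0}$ is symmetric; (2) $\mu_t$ is symmetric for all $t>0$; (3) $\gamma=0$ and $\tau$ is symmetric.
   Context: A measure $\mu$ on $\mathbb{R}$ is symmetric if $\mu(B)=\mu(-B)$ for all Borel sets $B$. For a probability measure $\mu$, $G_\mu(z)=\int\frac{1}{z-x}d\mu(x)$ on $\mathbb{C}^+$ and $H_\mu=1/G_\mu$; $\mu\rhd\nu$ is the unique probability measure with $H_{\mu\rhd\nu}=H_\mu\circ H_\nu$. A weakly continuous $\rhd$-convolution semigroup is a weakly continuous family $\{\mu_t\}_{t\ge0}$ of probability measures with $\mu_s\rhd\mu_t=\mu_{s+t}$. For such a semigroup with $\mu_0=\delta_0$ there is a unique pair $(\gamma,\tau)$, $\gamma\in\mathbb{R}$, $\tau$ positive finite, such that with $A(z)=-\gamma+\int\frac{1+xz}{x-z}d\tau(x)$ the maps $H_t:=H_{\mu_t}$ solve $\frac{d}{dt}H_t(z)=A(H_t(z))$, $H_0(z)=z$, on $\mathbb{C}\setminus\mathbb{R}$ (the associated pair). *)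

theory Defs
  imports "HOL-Probability.Probability"
begin

definition cauchy_G :: "real measure \<Rightarrow> complex \<Rightarrow> complex" where
  "cauchy_G M z = (\<integral>x. 1 / (z - complex_of_real x) \<partial>M)"

definition cauchy_H :: "real measure \<Rightarrow> complex \<Rightarrow> complex" where
  "cauchy_H M z = 1 / cauchy_G M z"

definition is_monotone_conv :: "real measure \<Rightarrow> real measure \<Rightarrow> real measure \<Rightarrow> bool" where
  "is_monotone_conv \<mu> \<nu> \<rho> \<longleftrightarrow>
     (\<forall>z. Im z > 0 \<longrightarrow> cauchy_H \<rho> z = cauchy_H \<mu> (cauchy_H \<nu> z))"

definition real_prob_measure :: "real measure \<Rightarrow> bool" where
  "real_prob_measure M \<longleftrightarrow> prob_space M \<and> sets M = sets borel"

definition symmetric_measure :: "real measure \<Rightarrow> bool" where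
  "symmetric_measure M \<longleftrightarrow> (\<forall>B \<in> sets borel. emeasure M B = emeasure M (uminus ` B))"

definition measure_support :: "real measure \<Rightarrow> real set" where
  "measure_support M = {x. \<forall>e>0. emeasure M (ball x e) > 0}"

definition weakly_continuous_family :: "(real \<Rightarrow> real measure) \<Rightarrow> bool" where
  "weakly_continuous_family \<mu> \<longleftrightarrow>
     (\<forall>f :: real \<Rightarrow> real. continuous_on UNIV f \<longrightarrow> bounded (range f) \<longrightarrow>
        continuous_on {0..} (\<lambda>t. \<integral>x. f x \<partial>(\<mu> t)))"

definition monotone_conv_semigroup :: "(real \<Rightarrow> real measure) \<Rightarrow> bool" where
  "monotone_conv_semigroup \<mu> \<longleftrightarrow>
     (\<forall>t\<ge>0. real_prob_measure (\<mu> t)) \<and> weakly_continuous_family \<mu> \<and>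
     (\<forall>s\<ge>0. \<forall>t\<ge>0. is_monotone_conv (\<mu> s) (\<mu> t) (\<mu> (s + t)))"

definition gen_A :: "real \<Rightarrow> real measure \<Rightarrow> complex \<Rightarrow> complex" where
  "gen_A \<gamma> \<tau> z = - complex_of_real \<gamma> +
     (\<integral>x. (1 + complex_of_real x * z) / (complex_of_real x - z) \<partial>\<tau>)"

definition associated_pair :: "(real \<Rightarrow> real measure) \<Rightarrow> real \<Rightarrow> real measure \<Rightarrow> bool" where
  "associated_pair \<mu> \<gamma> \<tau> \<longleftrightarrow>
     finite_measure \<tau> \<and> sets \<tau> = sets borel \<and>
     (\<forall>z. Im z \<noteq> 0 \<longrightarrow>
        cauchy_H (\<mu> 0) z = z \<and>
        (\<forall>t\<ge>0. ((\<lambda>s. cauchy_H (\<mu> s) z) has_vector_derivative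
                   gen_A \<gamma> \<tau> (cauchy_H (\<mu> t) z)) (at t within {0..})))"

end

theory Submission
  imports Defs "HOL-Complex_Analysis.Complex_Analysis"
begin

text \<open>
  Reflecting a measure in the origin turns its reciprocal Cauchy transform \<open>H\<close> into
  \<open>z \<mapsto> - cnj (H (- cnj z))\<close>, and a finite measure is determined by its Cauchy transform; so
  \<open>\<mu>\<close> is symmetric iff \<open>H\<^sub>\<mu>\<close> commutes with the reflection \<open>z \<mapsto> - cnj z\<close>.

  The generator \<open>A\<close> is the derivative of \<open>H\<^sub>t\<close> at \<open>t = 0\<close>, so symmetry of \<open>\<mu>\<^sub>t\<close> along a
  sequence \<open>t\<^sub>n \<rightarrow> 0\<close> makes \<open>A\<close> commute with the reflection. Writing
  \<open>A(z) = -\<gamma> + z \<tau>(\<real>) - (1 + z\<^sup>2) G\<^sub>\<tau>(z)\<close> shows that this happens iff \<open>\<gamma> = 0\<close> and \<open>\<tau>\<close> is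
  symmetric. Conversely, if \<open>A\<close> commutes with the reflection, \<open>t \<mapsto> - cnj (H\<^sub>t (- cnj z))\<close> solves
  the same locally Lipschitz equation \<open>dH\<^sub>t/dt = A(H\<^sub>t)\<close> as \<open>t \<mapsto> H\<^sub>t z\<close>, so every \<open>\<mu>\<^sub>t\<close> is symmetric.

  A single symmetric \<open>\<mu>\<^sub>t\<^sub>0\<close> yields the sequence \<open>t\<^sub>0 / 2\<^sup>n\<close>, because symmetry passes from
  \<open>\<mu>\<^sub>2\<^sub>s = \<mu>\<^sub>s \<rhd> \<mu>\<^sub>s\<close> to \<open>\<mu>\<^sub>s\<close>: for compactly supported \<open>M\<close>, \<open>N\<close>, \<open>H\<^sub>M \<circ> H\<^sub>M = H\<^sub>N \<circ> H\<^sub>N\<close>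
  forces \<open>M = N\<close>. Indeed \<open>d = H\<^sub>M - H\<^sub>N\<close> is \<open>w\<close> times a function holomorphic in \<open>1/w\<close> near
  infinity, so either \<open>d = 0\<close> or \<open>d(w) \<sim> c w\<^sup>1\<^sup>-\<^sup>n\<close>. In the latter case \<open>d(H\<^sub>N z)/d(z) \<rightarrow> 1\<close> as
  \<open>z \<rightarrow> \<i>\<infinity>\<close>, since \<open>H\<^sub>N(z) \<sim> z\<close>; but by \<open>H\<^sub>M \<circ> H\<^sub>M = H\<^sub>N \<circ> H\<^sub>N\<close> this ratio is minus a difference
  quotient of \<open>H\<^sub>M\<close>, and those tend to \<open>1\<close> at infinity.
\<close>

section \<open>The Cauchy transform of a finite Borel measure\<close>

lemma norm_cauchy_kernel_le:
  assumes "Im z \<noteq> 0"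
  shows "norm (1 / (z - complex_of_real x)) \<le> 1 / \<bar>Im z\<bar>"
proof -
  have "\<bar>Im z\<bar> \<le> cmod (z - complex_of_real x)"
    using abs_Im_le_cmod[of "z - complex_of_real x"] by simp
  then show ?thesis using assms by (simp add: norm_divide frac_le)
qed

lemma integrable_cauchy_kernel:
  assumes "finite_measure M" "sets M = sets borel" "Im z \<noteq> 0"
  shows "integrable M (\<lambda>x. 1 / (z - complex_of_real x))"
proof -
  interpret finite_measure M by fact
  have "(\<lambda>x. 1 / (z - complex_of_real x)) \<in> borel_measurable M"
    by (simp add: measurable_cong_sets[OF assms(2) refl])
  then show ?thesis
    by (intro integrable_const_bound[where B = "1 / \<bar>Im z\<bar>"])
       (use norm_cauchy_kernel_le[OF assms(3)] in auto)
qed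

lemma has_field_derivative_if_quadratic_remainder:
  fixes f :: "complex \<Rightarrow> complex"
  assumes "d > 0"
    and "\<And>u. u \<in> ball u0 d \<Longrightarrow> norm (f u - f u0 - (u - u0) * D) \<le> C * (norm (u - u0))\<^sup>2"
  shows "(f has_field_derivative D) (at u0)"
proof -
  have "\<forall>\<^sub>F u in at u0. u \<in> ball u0 d \<and> u \<noteq> u0"
    using assms(1) by (auto simp: eventually_at dist_commute intro!: exI[of _ d])
  then have "\<forall>\<^sub>F u in at u0. norm ((f u - f u0) / (u - u0) - D) \<le> C * norm (u - u0)"
  proof eventually_elim
    case (elim u)
    then have "(f u - f u0) / (u - u0) - D = (f u - f u0 - (u - u0) * D) / (u - u0)"
      by (simp add: field_simps)
    then show ?case
      using assms(2)[of u] elim by (simp add: norm_divide divide_le_eq power2_eq_square mult.assoc)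
  qed
  moreover have "((\<lambda>u. C * norm (u - u0)) \<longlongrightarrow> 0) (at u0)"
    by (auto intro!: tendsto_eq_intros)
  ultimately have "((\<lambda>u. (f u - f u0) / (u - u0) - D) \<longlongrightarrow> 0) (at u0)"
    by (rule Lim_null_comparison)
  then show ?thesis
    unfolding has_field_derivative_iff by (rule LIM_zero_cancel)
qed

lemma norm_inverse_affine_remainder_le:
  fixes a b u u0 :: complex
  assumes "cmod (a + b * u) \<ge> c" "cmod (a + b * u0) \<ge> c" "cmod b \<le> Q" "c > 0"
  shows "cmod (1 / (a + b * u) - 1 / (a + b * u0) - (u - u0) * (- b / (a + b * u0)\<^sup>2))
    \<le> Q\<^sup>2 / c^3 * (cmod (u - u0))\<^sup>2"
proof -
  define A where "A = a + b * u"
  define B where "B = a + b * u0"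
  have "A \<noteq> 0" "B \<noteq> 0" using assms by (auto simp: A_def B_def)
  have "A - B = b * (u - u0)" by (simp add: A_def B_def algebra_simps)
  then have "1 / A - 1 / B - (u - u0) * (- b / B\<^sup>2) = 1 / A - 1 / B + (A - B) / B\<^sup>2"
    by (simp add: algebra_simps)
  also have "\<dots> = (A - B)\<^sup>2 / (A * B\<^sup>2)"
    using \<open>A \<noteq> 0\<close> \<open>B \<noteq> 0\<close> by (simp add: field_simps power2_eq_square)
  also have "cmod \<dots> \<le> Q\<^sup>2 * (cmod (u - u0))\<^sup>2 / (c * c\<^sup>2)"
    unfolding \<open>A - B = b * (u - u0)\<close> power_mult_distrib norm_divide norm_mult norm_power using assms
    by (intro frac_le mult_mono power_mono) (auto simp: A_def B_def)
  finally show ?thesis by (simp add: A_def B_def power3_eq_cube power2_eq_square field_simps)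
qed

lemma has_field_derivative_integral_if_quadratic_remainder:
  fixes k :: "complex \<Rightarrow> 'a \<Rightarrow> complex"
  assumes "finite_measure M" "d > 0"
    and k_int: "\<And>u. u \<in> ball u0 d \<Longrightarrow> integrable M (k u)" and k'_int: "integrable M k'"
    and remainder: "\<And>u. u \<in> ball u0 d \<Longrightarrow>
      AE x in M. norm (k u x - k u0 x - (u - u0) * k' x) \<le> C * (norm (u - u0))\<^sup>2"
  shows "((\<lambda>u. \<integral>x. k u x \<partial>M) has_field_derivative (\<integral>x. k' x \<partial>M)) (at u0)"
proof (rule has_field_derivative_if_quadratic_remainder[OF \<open>d > 0\<close>, where C = "C * measure M (space M)"])
  interpret finite_measure M by fact
  fix u assume u: "u \<in> ball u0 d"
  have u0: "u0 \<in> ball u0 d" using \<open>d > 0\<close> by simp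
  have "(\<integral>x. k u x \<partial>M) - (\<integral>x. k u0 x \<partial>M) - (u - u0) * (\<integral>x. k' x \<partial>M)
        = (\<integral>x. k u x - k u0 x - (u - u0) * k' x \<partial>M)"
    using k_int[OF u] k_int[OF u0] k'_int by simp
  also have "norm \<dots> \<le> (\<integral>x. norm (k u x - k u0 x - (u - u0) * k' x) \<partial>M)"
    by (rule integral_norm_bound)
  also have "\<dots> \<le> (\<integral>x. C * (norm (u - u0))\<^sup>2 \<partial>M)"
    using remainder[OF u] k_int[OF u] k_int[OF u0] k'_int by (intro integral_mono_AE) auto
  finally show "norm ((\<integral>x. k u x \<partial>M) - (\<integral>x. k u0 x \<partial>M) - (u - u0) * (\<integral>x. k' x \<partial>M))
      \<le> C * measure M (space M) * (norm (u - u0))\<^sup>2"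
    by (simp add: mult_ac)
qed

text \<open>Both the Cauchy transform \<open>p x = -x, q x = 1\<close> and its expansion at infinity
  \<open>p x = 1, q x = -x\<close> are integrals of this kind.\<close>
lemma has_field_derivative_integral_inverse_affine:
  fixes p q :: "real \<Rightarrow> real"
  assumes "finite_measure M" and sets_M: "sets M = sets borel"
    and [measurable]: "p \<in> borel_measurable borel" "q \<in> borel_measurable borel"
    and q_bound: "AE x in M. \<bar>q x\<bar> \<le> Q"
    and "d > 0" "c > 0"
    and lower: "\<And>u. u \<in> ball u0 d \<Longrightarrow>
      AE x in M. cmod (complex_of_real (p x) + complex_of_real (q x) * u) \<ge> c"
  shows "((\<lambda>u. \<integral>x. 1 / (complex_of_real (p x) + complex_of_real (q x) * u) \<partial>M)
          has_field_derivative
          (\<integral>x. - complex_of_real (q x) / (complex_of_real (p x) + complex_of_real (q x) * u0)\<^sup>2 \<partial>M))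
         (at u0)"
proof -
  interpret finite_measure M by fact
  note sets_M[measurable_cong]
  define k where "k u x = 1 / (complex_of_real (p x) + complex_of_real (q x) * u)" for u x
  define k' where "k' x = - complex_of_real (q x) / (complex_of_real (p x) + complex_of_real (q x) * u0)\<^sup>2" for x
  have u0: "u0 \<in> ball u0 d" using \<open>d > 0\<close> by simp
  have k_int: "integrable M (k u)" if "u \<in> ball u0 d" for u
  proof (rule integrable_const_bound[where B = "1 / c"])
    show "AE x in M. norm (k u x) \<le> 1 / c"
      using lower[OF that] by eventually_elim (use \<open>c > 0\<close> in \<open>auto simp: k_def norm_divide divide_simps\<close>)
  qed (unfold k_def, measurable)
  have k'_int: "integrable M k'"
  proof (rule integrable_const_bound[where B = "\<bar>Q\<bar> / c\<^sup>2"])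
    show "AE x in M. norm (k' x) \<le> \<bar>Q\<bar> / c\<^sup>2"
      using lower[OF u0] q_bound
    proof eventually_elim
      case (elim x)
      have "c\<^sup>2 \<le> (cmod (complex_of_real (p x) + complex_of_real (q x) * u0))\<^sup>2"
        using elim \<open>c > 0\<close> by (intro power_mono) auto
      then show ?case using elim \<open>c > 0\<close>
        unfolding k'_def norm_divide norm_minus_cancel norm_power by (intro frac_le) auto
    qed
  qed (unfold k'_def, measurable)
  have "AE x in M. norm (k u x - k u0 x - (u - u0) * k' x) \<le> Q\<^sup>2 / c^3 * (norm (u - u0))\<^sup>2"
    if "u \<in> ball u0 d" for u
    using lower[OF that] lower[OF u0] q_bound
  proof eventually_elim
    case (elim x)
    then show ?case
      unfolding k_def k'_def using \<open>c > 0\<close> by (intro norm_inverse_affine_remainder_le) auto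
  qed
  then have "((\<lambda>u. \<integral>x. k u x \<partial>M) has_field_derivative (\<integral>x. k' x \<partial>M)) (at u0)"
    by (intro has_field_derivative_integral_if_quadratic_remainder[OF assms(1) \<open>d > 0\<close> k_int k'_int])
  then show ?thesis by (simp add: k_def k'_def)
qed

lemma cauchy_G_holomorphic:
  assumes "finite_measure M" "sets M = sets borel"
  shows "cauchy_G M holomorphic_on {z. Im z > 0}"
proof -
  have "cauchy_G M field_differentiable at u0" if "Im u0 > 0" for u0
  proof -
    have "((\<lambda>u. \<integral>x. 1 / (complex_of_real (- x) + complex_of_real 1 * u) \<partial>M) has_field_derivative
          (\<integral>x. - complex_of_real 1 / (complex_of_real (- x) + complex_of_real 1 * u0)\<^sup>2 \<partial>M)) (at u0)"
    proof (rule has_field_derivative_integral_inverse_affine[OF assms,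
          where Q = 1 and d = "Im u0 / 2" and c = "Im u0 / 2"])
      fix u assume "u \<in> ball u0 (Im u0 / 2)"
      then have "\<bar>Im u - Im u0\<bar> < Im u0 / 2"
        using abs_Im_le_cmod[of "u - u0"] by (simp add: dist_norm norm_minus_commute)
      then have "Im u0 / 2 < Im u" by arith
      then have "Im u0 / 2 \<le> cmod (complex_of_real (- x) + u)" for x
        using abs_Im_le_cmod[of "complex_of_real (- x) + u"] by simp
      then show "AE x in M. Im u0 / 2 \<le> cmod (complex_of_real (- x) + complex_of_real 1 * u)"
        by simp
    qed (use that in auto)
    then show ?thesis
      unfolding cauchy_G_def field_differentiable_def by (auto simp: algebra_simps)
  qed
  then show ?thesis
    by (simp add: holomorphic_on_def field_differentiable_at_within)
qed

lemma integral_pos_if_pos: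
  fixes f :: "'a \<Rightarrow> real"
  assumes "integrable M f" "\<And>x. f x > 0" "emeasure M (space M) \<noteq> 0"
  shows "(\<integral>x. f x \<partial>M) > 0"
proof -
  have "(\<integral>x. f x \<partial>M) \<noteq> 0"
  proof
    assume "(\<integral>x. f x \<partial>M) = 0"
    then have "AE x in M. f x = 0"
      using integral_nonneg_eq_0_iff_AE[OF assms(1)] assms(2) by (auto intro: less_imp_le)
    then have "AE x in M. False" using assms(2) by (auto elim: AE_mp simp: less_le)
    then show False using assms(3) ae_filter_eq_bot_iff[of M] by (simp add: trivial_limit_def)
  qed
  moreover have "(\<integral>x. f x \<partial>M) \<ge> 0" using assms(2) by (intro integral_nonneg_AE) (auto intro: less_imp_le)
  ultimately show ?thesis by simp
qed

lemma Im_cauchy_kernel: "Im (1 / (z - complex_of_real x)) = - Im z / (cmod (z - complex_of_real x))\<^sup>2"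
  by (simp add: Im_divide cmod_def)

lemma Im_cauchy_G_neg:
  assumes "finite_measure M" "sets M = sets borel" "emeasure M (space M) \<noteq> 0" "Im z > 0"
  shows "Im (cauchy_G M z) < 0"
proof -
  have int: "integrable M (\<lambda>x. 1 / (z - complex_of_real x))"
    using integrable_cauchy_kernel[OF assms(1,2)] assms(4) by simp
  have "Im (cauchy_G M z) = (\<integral>x. Im (1 / (z - complex_of_real x)) \<partial>M)"
    unfolding cauchy_G_def using int by simp
  also have "\<dots> = - (\<integral>x. Im z / (cmod (z - complex_of_real x))\<^sup>2 \<partial>M)"
    by (simp add: Im_cauchy_kernel)
  also have "\<dots> < 0"
  proof -
    have "integrable M (\<lambda>x. Im z / (cmod (z - complex_of_real x))\<^sup>2)"
      using integrable_minus[OF integrable_Im[OF int]] by (simp add: Im_cauchy_kernel)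
    moreover have "Im z / (cmod (z - complex_of_real x))\<^sup>2 > 0" for x
      using assms(4) by (auto simp: complex_eq_iff)
    ultimately show ?thesis using integral_pos_if_pos assms(3) by (metis neg_less_0_iff_less)
  qed
  finally show ?thesis .
qed

lemma
  assumes "prob_space M" "sets M = sets borel" "Im z > 0"
  shows cauchy_G_nonzero: "cauchy_G M z \<noteq> 0"
    and Im_cauchy_H_pos: "Im (cauchy_H M z) > 0"
proof -
  have Im_G: "Im (cauchy_G M z) < 0"
    using assms by (intro Im_cauchy_G_neg) (auto simp: prob_space_def prob_space.emeasure_space_1)
  then show "cauchy_G M z \<noteq> 0" by auto
  then have "(cmod (cauchy_G M z))\<^sup>2 > 0" by simp
  with Im_G show "Im (cauchy_H M z) > 0"
    unfolding cauchy_H_def by (simp add: Im_divide cmod_def divide_neg_pos)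
qed

section \<open>Reflection of a measure\<close>

definition reflect_measure :: "real measure \<Rightarrow> real measure" where
  "reflect_measure M = distr M borel uminus"

lemma sets_reflect_measure [simp]: "sets (reflect_measure M) = sets borel"
  by (simp add: reflect_measure_def)

lemma finite_measure_reflect_measure:
  assumes "finite_measure M" "sets M = sets borel"
  shows "finite_measure (reflect_measure M)"
  unfolding reflect_measure_def using assms
  by (intro finite_measure.finite_measure_distr) (auto simp: measurable_cong_sets[OF assms(2) refl])

lemma prob_space_reflect_measure:
  assumes "prob_space M" "sets M = sets borel"
  shows "prob_space (reflect_measure M)"
  unfolding reflect_measure_def using assms
  by (intro prob_space.prob_space_distr) (auto simp: measurable_cong_sets[OF assms(2) refl])

lemma emeasure_reflect_measure:
  assumes "sets M = sets borel" "B \<in> sets borel"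
  shows "emeasure (reflect_measure M) B = emeasure M (uminus ` B)"
proof -
  have "emeasure (reflect_measure M) B = emeasure M (uminus -` B \<inter> space M)"
    unfolding reflect_measure_def using assms
    by (subst emeasure_distr) (auto simp: measurable_cong_sets[OF assms(1) refl])
  also have "uminus -` B \<inter> space M = uminus ` B"
    using sets_eq_imp_space_eq[OF assms(1)] by (auto simp: image_iff) (metis minus_minus)
  finally show ?thesis .
qed

lemma symmetric_measure_iff_reflect_eq:
  assumes "sets M = sets borel"
  shows "symmetric_measure M \<longleftrightarrow> reflect_measure M = M"
  using emeasure_reflect_measure[OF assms] assms
  unfolding symmetric_measure_def by (metis measure_eqI sets_reflect_measure)

lemma AE_reflect_measure_abs_le:
  assumes "sets M = sets borel" "AE x in M. \<bar>x\<bar> \<le> R"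
  shows "AE x in reflect_measure M. \<bar>x\<bar> \<le> R"
  unfolding reflect_measure_def using assms
  by (subst AE_distr_iff) (auto simp: measurable_cong_sets[OF assms(1) refl])

lemma cauchy_G_reflect_measure:
  assumes "sets M = sets borel"
  shows "cauchy_G (reflect_measure M) z = - cnj (cauchy_G M (- cnj z))"
proof -
  have "cauchy_G (reflect_measure M) z = (\<integral>x. 1 / (z - complex_of_real (- x)) \<partial>M)"
    unfolding cauchy_G_def reflect_measure_def using assms
    by (subst integral_distr) (auto simp: measurable_cong_sets[OF assms refl])
  also have "\<dots> = (\<integral>x. - cnj (1 / (- cnj z - complex_of_real x)) \<partial>M)"
    by (intro Bochner_Integration.integral_cong refl) (simp add: divide_minus_right[symmetric])
  also have "\<dots> = - cnj (cauchy_G M (- cnj z))"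
    unfolding cauchy_G_def by (simp only: integral_minus Bochner_Integration.integral_cnj)
  finally show ?thesis .
qed

lemma cauchy_H_reflect_measure:
  assumes "sets M = sets borel"
  shows "cauchy_H (reflect_measure M) z = - cnj (cauchy_H M (- cnj z))"
  unfolding cauchy_H_def cauchy_G_reflect_measure[OF assms] by (simp add: divide_simps)

lemma cauchy_H_symmetric_measure:
  assumes "symmetric_measure M" "sets M = sets borel"
  shows "cauchy_H M (- cnj z) = - cnj (cauchy_H M z)"
  using cauchy_H_reflect_measure[OF assms(2), of "- cnj z"] assms
  by (simp add: symmetric_measure_iff_reflect_eq)

section \<open>A finite measure is determined by its Cauchy transform\<close>

definition cauchy_density :: "real \<Rightarrow> real" where
  "cauchy_density v = 1 / (pi * (1 + v\<^sup>2))"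

lemma cauchy_density_pos: "cauchy_density v > 0"
  unfolding cauchy_density_def by (simp add: add_pos_nonneg)

lemma continuous_on_cauchy_density: "continuous_on UNIV cauchy_density"
  unfolding cauchy_density_def
  by (intro continuous_intros) (auto simp: add_pos_nonneg add_nonneg_eq_0_iff)

lemma borel_measurable_cauchy_density [measurable]: "cauchy_density \<in> borel_measurable borel"
  by (rule borel_measurable_continuous_onI[OF continuous_on_cauchy_density])

lemma
  shows integrable_cauchy_density: "integrable lborel cauchy_density"
    and integral_cauchy_density: "(\<integral>v. cauchy_density v \<partial>lborel) = 1"
proof -
  have eq: "cauchy_density = (\<lambda>x. inverse (1 + x\<^sup>2) / pi)"
    by (auto simp: cauchy_density_def fun_eq_iff field_simps)
  have "set_integrable lborel (einterval (-\<infinity>) \<infinity>) (\<lambda>x::real. inverse (1 + x\<^sup>2))"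
    by (rule integrable_inverse_1_plus_square)
  then show "integrable lborel cauchy_density"
    unfolding eq by (simp add: set_integrable_def einterval_def)
  show "(\<integral>v. cauchy_density v \<partial>lborel) = 1"
    using LBINT_inverse_1_plus_square unfolding eq
    by (simp add: interval_lebesgue_integral_def set_lebesgue_integral_def einterval_def)
qed

lemma
  fixes y :: real
  assumes "y > 0"
  shows integrable_scaled_cauchy_density: "integrable lborel (\<lambda>a. cauchy_density ((a - x) / y) / y)"
    and integral_scaled_cauchy_density: "(\<integral>a. cauchy_density ((a - x) / y) / y \<partial>lborel) = 1"
    and integral_mult_scaled_cauchy_density:
      "(\<integral>a. f a * complex_of_real (cauchy_density ((a - x) / y) / y) \<partial>lborel)
        = (\<integral>v. f (x + y * v) * complex_of_real (cauchy_density v) \<partial>lborel)"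
proof -
  have y: "y \<noteq> 0" using assms by simp
  have e: "(\<lambda>v. cauchy_density ((x + y * v - x) / y) / y) = (\<lambda>v. cauchy_density v / y)"
    using y by (auto simp: fun_eq_iff)
  show "integrable lborel (\<lambda>a. cauchy_density ((a - x) / y) / y)"
    using lborel_integrable_real_affine_iff[OF y, of "\<lambda>a. cauchy_density ((a - x) / y) / y" x]
      e integrable_cauchy_density by simp
  show "(\<integral>a. cauchy_density ((a - x) / y) / y \<partial>lborel) = 1"
    using lborel_integral_real_affine[OF y, of "\<lambda>a. cauchy_density ((a - x) / y) / y" x]
      e integral_cauchy_density assms by simp
  show "(\<integral>a. f a * complex_of_real (cauchy_density ((a - x) / y) / y) \<partial>lborel)
        = (\<integral>v. f (x + y * v) * complex_of_real (cauchy_density v) \<partial>lborel)"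
    using lborel_integral_real_affine[OF y, of "\<lambda>a. f a * complex_of_real (cauchy_density ((a - x) / y) / y)" x]
      assms by (simp add: scaleR_conv_of_real mult_ac)
qed

lemma Im_cauchy_G_eq_integral_cauchy_density:
  assumes "finite_measure M" "sets M = sets borel" "y > 0"
  shows "- Im (cauchy_G M (complex_of_real a + \<i> * complex_of_real y)) / pi
       = (\<integral>x. cauchy_density ((a - x) / y) / y \<partial>M)"
proof -
  define w where "w = complex_of_real a + \<i> * complex_of_real y"
  have int: "integrable M (\<lambda>x. 1 / (w - complex_of_real x))"
    using integrable_cauchy_kernel[OF assms(1,2)] assms(3) by (simp add: w_def)
  have kernel: "Im (1 / (w - complex_of_real x)) = - (cauchy_density ((a - x) / y) / y * pi)" for x
  proof -
    define D where "D = (a - x)\<^sup>2 + y\<^sup>2"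
    have "D > 0" using assms(3) by (simp add: D_def add_nonneg_pos)
    have "1 + ((a - x) / y)\<^sup>2 = D / y\<^sup>2" using assms(3) by (simp add: D_def field_simps)
    then have "cauchy_density ((a - x) / y) / y * pi = y / ((a - x)\<^sup>2 + y\<^sup>2)"
      using assms(3) \<open>D > 0\<close> by (simp add: cauchy_density_def D_def[symmetric] field_simps power2_eq_square)
    then show ?thesis by (simp add: Im_cauchy_kernel w_def cmod_def)
  qed
  have "Im (cauchy_G M w) = (\<integral>x. Im (1 / (w - complex_of_real x)) \<partial>M)"
    unfolding cauchy_G_def using int by simp
  also have "\<dots> = - ((\<integral>x. cauchy_density ((a - x) / y) / y \<partial>M) * pi)"
    by (simp only: kernel integral_minus integral_mult_left_zero)
  finally show ?thesis by (simp add: w_def)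
qed

lemma norm_mult_of_real_le:
  fixes \<phi> :: "'a \<Rightarrow> complex"
  assumes "\<And>x. norm (\<phi> x) \<le> B" "c \<ge> 0"
  shows "norm (\<phi> u * complex_of_real c) \<le> B * c"
  using assms by (simp add: norm_mult mult_right_mono)

lemma integral_mult_Im_cauchy_G_eq:
  fixes \<phi> :: "real \<Rightarrow> complex"
  assumes fin: "finite_measure M" and sets_M: "sets M = sets borel"
    and cont: "continuous_on UNIV \<phi>" and bound: "\<And>x. norm (\<phi> x) \<le> B" and y: "y > 0"
  shows "(\<integral>a. \<phi> a * complex_of_real (- Im (cauchy_G M (complex_of_real a + \<i> * complex_of_real y)) / pi) \<partial>lborel)
       = (\<integral>x. (\<integral>v. \<phi> (x + y * v) * complex_of_real (cauchy_density v) \<partial>lborel) \<partial>M)"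
proof -
  interpret finite_measure M by fact
  interpret P: pair_sigma_finite M lborel
    by (intro pair_sigma_finite.intro) (simp_all add: sigma_finite_measure_axioms lborel.sigma_finite_measure_axioms)
  have [measurable]: "\<phi> \<in> borel_measurable borel" by (rule borel_measurable_continuous_onI[OF cont])
  note sets_M[measurable_cong]
  define g where "g = (\<lambda>(x, a). \<phi> a * complex_of_real (cauchy_density ((a - x) / y) / y))"
  have [measurable]: "g \<in> borel_measurable (M \<Otimes>\<^sub>M lborel)"
    unfolding g_def by measurable
  have g_le: "norm (g (x, a)) \<le> B * (cauchy_density ((a - x) / y) / y)" for x a
    unfolding g_def using cauchy_density_pos[of "(a - x) / y"] y
    by (simp only: case_prod_conv) (intro norm_mult_of_real_le[OF bound]; simp)
  have g_int: "integrable lborel (\<lambda>a. g (x, a))" for x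
  proof (rule Bochner_Integration.integrable_bound)
    show "integrable lborel (\<lambda>a. B * (cauchy_density ((a - x) / y) / y))"
      using integrable_scaled_cauchy_density[OF y] by (rule integrable_mult_right)
    show "AE a in lborel. norm (g (x, a)) \<le> norm (B * (cauchy_density ((a - x) / y) / y))"
      using g_le by (intro AE_I2) (metis abs_ge_self order_trans real_norm_def)
  qed (simp add: g_def; measurable)
  have g_norm_int_le: "(\<integral>a. norm (g (x, a)) \<partial>lborel) \<le> B" for x
  proof -
    have "(\<integral>a. norm (g (x, a)) \<partial>lborel) \<le> (\<integral>a. B * (cauchy_density ((a - x) / y) / y) \<partial>lborel)"
      using g_int g_le integrable_mult_right[OF integrable_scaled_cauchy_density[OF y]]
      by (intro integral_mono) auto
    then show ?thesis using integral_scaled_cauchy_density[OF y] by simp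
  qed
  have "integrable (M \<Otimes>\<^sub>M lborel) g"
  proof (rule P.Fubini_integrable)
    show "integrable M (\<lambda>x. \<integral>a. norm (g (x, a)) \<partial>lborel)"
      using g_norm_int_le by (intro integrable_const_bound[where B = B] AE_I2) auto
  qed (use g_int in auto)
  then have "(\<integral>a. (\<integral>x. g (x, a) \<partial>M) \<partial>lborel) = (\<integral>x. (\<integral>a. g (x, a) \<partial>lborel) \<partial>M)"
    using P.Fubini_integral[of "\<lambda>x a. g (x, a)"] by simp
  moreover have "(\<integral>x. g (x, a) \<partial>M)
      = \<phi> a * complex_of_real (- Im (cauchy_G M (complex_of_real a + \<i> * complex_of_real y)) / pi)" for a
    unfolding g_def Im_cauchy_G_eq_integral_cauchy_density[OF fin sets_M y] by simp
  moreover have "(\<integral>a. g (x, a) \<partial>lborel) = (\<integral>v. \<phi> (x + y * v) * complex_of_real (cauchy_density v) \<partial>lborel)" for x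
    unfolding g_def using integral_mult_scaled_cauchy_density[OF y] by simp
  ultimately show ?thesis by simp
qed

lemma norm_integral_cauchy_smoothing_le:
  fixes \<phi> :: "real \<Rightarrow> complex"
  assumes cont: "continuous_on UNIV \<phi>" and bound: "\<And>x. norm (\<phi> x) \<le> B"
  shows "norm (\<integral>v. \<phi> (x + y * v) * complex_of_real (cauchy_density v) \<partial>lborel) \<le> B"
proof -
  have [measurable]: "\<phi> \<in> borel_measurable borel" by (rule borel_measurable_continuous_onI[OF cont])
  have dominated: "norm (\<phi> u * complex_of_real (cauchy_density v)) \<le> B * cauchy_density v" for u v
    using bound cauchy_density_pos[of v] by (intro norm_mult_of_real_le) auto
  have int: "integrable lborel (\<lambda>v. \<phi> (x + y * v) * complex_of_real (cauchy_density v))"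
  proof (rule Bochner_Integration.integrable_bound[where f = "\<lambda>v. B * cauchy_density v"])
    show "AE v in lborel. norm (\<phi> (x + y * v) * complex_of_real (cauchy_density v))
        \<le> norm (B * cauchy_density v)"
      using dominated by (intro AE_I2) (metis abs_ge_self order_trans real_norm_def)
  qed (use integrable_cauchy_density in \<open>simp, measurable\<close>)
  have "norm (\<integral>v. \<phi> (x + y * v) * complex_of_real (cauchy_density v) \<partial>lborel)
      \<le> (\<integral>v. norm (\<phi> (x + y * v) * complex_of_real (cauchy_density v)) \<partial>lborel)"
    by (rule integral_norm_bound)
  also have "\<dots> \<le> (\<integral>v. B * cauchy_density v \<partial>lborel)"
    using int integrable_cauchy_density dominated by (intro integral_mono) simp_all
  finally show ?thesis using integral_cauchy_density by simp
qed

lemma tendsto_integral_cauchy_smoothing: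
  fixes \<phi> :: "real \<Rightarrow> complex"
  assumes cont: "continuous_on UNIV \<phi>" and bound: "\<And>x. norm (\<phi> x) \<le> B" and "y \<longlonglongrightarrow> 0"
  shows "(\<lambda>n. \<integral>v. \<phi> (x + y n * v) * complex_of_real (cauchy_density v) \<partial>lborel) \<longlonglongrightarrow> \<phi> x"
proof -
  have [measurable]: "\<phi> \<in> borel_measurable borel" by (rule borel_measurable_continuous_onI[OF cont])
  have dominated: "norm (\<phi> u * complex_of_real (cauchy_density v)) \<le> B * cauchy_density v" for u v
    using bound cauchy_density_pos[of v] by (intro norm_mult_of_real_le) auto
  have "(\<lambda>n. \<integral>v. \<phi> (x + y n * v) * complex_of_real (cauchy_density v) \<partial>lborel)
        \<longlonglongrightarrow> (\<integral>v. \<phi> x * complex_of_real (cauchy_density v) \<partial>lborel)"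
  proof (rule integral_dominated_convergence[where w = "\<lambda>v. B * cauchy_density v"])
    show "AE v in lborel. (\<lambda>n. \<phi> (x + y n * v) * complex_of_real (cauchy_density v))
            \<longlonglongrightarrow> \<phi> x * complex_of_real (cauchy_density v)"
    proof (intro AE_I2 tendsto_intros)
      fix v
      have "(\<lambda>n. x + y n * v) \<longlonglongrightarrow> x + 0 * v"
        by (intro tendsto_intros \<open>y \<longlonglongrightarrow> 0\<close>)
      then show "(\<lambda>n. \<phi> (x + y n * v)) \<longlonglongrightarrow> \<phi> x"
        using cont by (auto intro: continuous_on_tendsto_compose[of UNIV \<phi>])
    qed
    show "AE v in lborel. norm (\<phi> (x + y n * v) * complex_of_real (cauchy_density v)) \<le> B * cauchy_density v" for n
      using dominated by simp
  qed (use integrable_cauchy_density in \<open>simp_all, measurable\<close>)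
  then show ?thesis using integral_cauchy_density by simp
qed

text \<open>A weak form of the Stieltjes inversion formula.\<close>
lemma tendsto_integral_mult_Im_cauchy_G:
  fixes \<phi> :: "real \<Rightarrow> complex"
  assumes fin: "finite_measure M" and sets_M: "sets M = sets borel"
    and cont: "continuous_on UNIV \<phi>" and bound: "\<And>x. norm (\<phi> x) \<le> B"
  shows "(\<lambda>n. \<integral>a. \<phi> a * complex_of_real (- Im (cauchy_G M (complex_of_real a + \<i> * complex_of_real (1 / Suc n))) / pi) \<partial>lborel)
         \<longlonglongrightarrow> (\<integral>x. \<phi> x \<partial>M)"
proof -
  interpret finite_measure M by fact
  have [measurable]: "\<phi> \<in> borel_measurable borel" by (rule borel_measurable_continuous_onI[OF cont])
  note sets_M[measurable_cong]
  define s where "s n x = (\<integral>v. \<phi> (x + 1 / Suc n * v) * complex_of_real (cauchy_density v) \<partial>lborel)" for n x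
  have "(\<lambda>n. \<integral>x. s n x \<partial>M) \<longlonglongrightarrow> (\<integral>x. \<phi> x \<partial>M)"
  proof (rule integral_dominated_convergence[where w = "\<lambda>_. B"])
    show "s n \<in> borel_measurable M" for n
      unfolding s_def by measurable
    show "AE x in M. norm (s n x) \<le> B" for n
      unfolding s_def by (intro AE_I2 norm_integral_cauchy_smoothing_le[OF cont bound])
    show "AE x in M. (\<lambda>n. s n x) \<longlonglongrightarrow> \<phi> x"
      unfolding s_def
      by (intro AE_I2 tendsto_integral_cauchy_smoothing[OF cont bound]
          LIMSEQ_inverse_real_of_nat[unfolded inverse_eq_divide])
  qed auto
  moreover have "(\<integral>a. \<phi> a * complex_of_real (- Im (cauchy_G M (complex_of_real a + \<i> * complex_of_real (1 / Suc n))) / pi) \<partial>lborel)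
      = (\<integral>x. s n x \<partial>M)" for n
    using integral_mult_Im_cauchy_G_eq[OF fin sets_M cont bound, of "1 / Suc n"] by (simp add: s_def)
  ultimately show ?thesis by simp
qed

lemma real_distribution_density_inverse_mass:
  assumes "finite_measure L" "sets L = sets borel" "measure L (space L) = m" "m > 0"
  shows "real_distribution (density L (\<lambda>_. ennreal (1 / m)))"
proof -
  have "space L = UNIV" using sets_eq_imp_space_eq[OF assms(2)] by simp
  then have "emeasure (density L (\<lambda>_. ennreal (1 / m))) (space (density L (\<lambda>_. ennreal (1 / m))))
      = ennreal (1 / m) * ennreal m"
    using assms finite_measure.emeasure_eq_measure[OF assms(1)] by (subst emeasure_density_const) auto
  also have "\<dots> = 1" using assms(4) by (simp add: ennreal_mult''[symmetric])
  finally have "prob_space (density L (\<lambda>_. ennreal (1 / m)))" by (rule prob_spaceI)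
  then show ?thesis
    using assms(2) by (simp add: real_distribution_def real_distribution_axioms_def)
qed

lemma char_density_const:
  assumes "sets L = sets borel" "c \<ge> 0"
  shows "char (density L (\<lambda>_. ennreal c)) t = c *\<^sub>R char L t"
  unfolding char_def using assms
  by (subst integral_density) (auto simp: measurable_cong_sets[OF assms(1) refl])

lemma finite_measure_eq_if_char_eq:
  assumes "finite_measure M" "sets M = sets borel" "finite_measure N" "sets N = sets borel"
    and mass: "measure M (space M) = measure N (space N)" and char: "\<And>t. char M t = char N t"
  shows "M = N"
proof -
  interpret M: finite_measure M by fact
  interpret N: finite_measure N by fact
  define m where "m = measure M (space M)"
  have "emeasure M A = emeasure N A" if "A \<in> sets borel" for A
  proof (cases "m = 0")
    case True
    then show ?thesis
      using emeasure_space[of M A] emeasure_space[of N A] mass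
      by (simp add: m_def M.emeasure_eq_measure N.emeasure_eq_measure)
  next
    case False
    then have "m > 0" by (simp add: m_def order_less_le)
    have "density M (\<lambda>_. ennreal (1 / m)) = density N (\<lambda>_. ennreal (1 / m))"
      using assms \<open>m > 0\<close>
      by (intro Levy_uniqueness real_distribution_density_inverse_mass)
         (auto simp: m_def fun_eq_iff char_density_const char)
    moreover have "A \<in> sets M" "A \<in> sets N" using that assms(2,4) by simp_all
    ultimately have "ennreal (1 / m) * emeasure M A = ennreal (1 / m) * emeasure N A"
      by (metis emeasure_density_const)
    moreover have "ennreal m * ennreal (1 / m) = 1" using \<open>m > 0\<close> by (simp add: ennreal_mult''[symmetric])
    ultimately show ?thesis by (metis mult.assoc mult_1)
  qed
  then show ?thesis by (intro measure_eqI) (simp_all add: assms(2,4))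
qed

lemma measure_eq_if_cauchy_G_eq:
  assumes "finite_measure M" "sets M = sets borel" "finite_measure N" "sets N = sets borel"
    and eq: "\<And>z. Im z > 0 \<Longrightarrow> cauchy_G M z = cauchy_G N z"
  shows "M = N"
proof -
  have integral_eq: "(\<integral>x. \<phi> x \<partial>M) = (\<integral>x. \<phi> x \<partial>N)"
    if "continuous_on UNIV \<phi>" "\<And>x. norm (\<phi> x) \<le> B" for \<phi> :: "real \<Rightarrow> complex" and B
    using tendsto_integral_mult_Im_cauchy_G[OF assms(1,2) that]
      tendsto_integral_mult_Im_cauchy_G[OF assms(3,4) that]
    by (simp add: eq LIMSEQ_unique)
  show ?thesis
  proof (rule finite_measure_eq_if_char_eq[OF assms(1-4)])
    show "measure M (space M) = measure N (space N)"
      using integral_eq[of "\<lambda>_. 1" 1] by simp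
    show "char M t = char N t" for t
      unfolding char_def
      by (rule integral_eq[where B = 1])
         (auto intro!: continuous_intros simp: norm_exp_i_times[unfolded of_real_mult])
  qed
qed

lemma measure_eq_if_cauchy_G_eq_above:
  assumes "finite_measure M" "sets M = sets borel" "finite_measure N" "sets N = sets borel"
    and eq: "\<And>z. Im z > c \<Longrightarrow> cauchy_G M z = cauchy_G N z"
  shows "M = N"
proof (rule measure_eq_if_cauchy_G_eq[OF assms(1-4)])
  fix z :: complex assume "Im z > 0"
  show "cauchy_G M z = cauchy_G N z"
  proof (rule analytic_continuation_open[where s = "{z. Im z > max c 0}" and s' = "{z. Im z > 0}"
        and f = "cauchy_G M" and g = "cauchy_G N"])
    show "{z::complex. max c 0 < Im z} \<noteq> {}"
      by (auto intro: exI[of _ "\<i> * complex_of_real (max c 0 + 1)"])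
    show "open {z::complex. max c 0 < Im z}"
      by (simp add: open_halfspace_Im_gt del: max_less_iff_conj)
    show "connected {z::complex. 0 < Im z}"
      by (simp add: convex_connected convex_halfspace_Im_gt)
  qed (use eq \<open>Im z > 0\<close> cauchy_G_holomorphic[OF assms(1,2)] cauchy_G_holomorphic[OF assms(3,4)] in
      \<open>auto simp: open_halfspace_Im_gt\<close>)
qed

lemma measure_eq_if_cauchy_H_eq_above:
  assumes "finite_measure M" "sets M = sets borel" "finite_measure N" "sets N = sets borel"
    and eq: "\<And>z. Im z > c \<Longrightarrow> cauchy_H M z = cauchy_H N z"
  shows "M = N"
proof (rule measure_eq_if_cauchy_G_eq_above[OF assms(1-4)])
  show "cauchy_G M z = cauchy_G N z" if "Im z > c" for z
    using eq[OF that] unfolding cauchy_H_def by (simp add: divide_cancel_left)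
qed

section \<open>The generator\<close>

lemma gen_A_eq:
  assumes "finite_measure \<tau>" "sets \<tau> = sets borel" "Im z \<noteq> 0"
  shows "gen_A \<gamma> \<tau> z
    = - complex_of_real \<gamma> + z * complex_of_real (measure \<tau> (space \<tau>)) - (1 + z\<^sup>2) * cauchy_G \<tau> z"
proof -
  interpret finite_measure \<tau> by fact
  have int: "integrable \<tau> (\<lambda>x. 1 / (z - complex_of_real x))"
    by (rule integrable_cauchy_kernel[OF assms])
  have kernel: "(1 + complex_of_real x * z) / (complex_of_real x - z)
      = z - (1 + z\<^sup>2) * (1 / (z - complex_of_real x))" for x
  proof -
    have "complex_of_real x - z \<noteq> 0" using assms(3) by (auto simp: complex_eq_iff)
    moreover have "1 / (z - complex_of_real x) = - (1 / (complex_of_real x - z))"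
      by (metis divide_minus_right minus_diff_eq)
    ultimately show ?thesis by (simp add: field_simps power2_eq_square)
  qed
  have "(\<integral>x. (1 + complex_of_real x * z) / (complex_of_real x - z) \<partial>\<tau>)
      = (\<integral>x. z \<partial>\<tau>) - (\<integral>x. (1 + z\<^sup>2) * (1 / (z - complex_of_real x)) \<partial>\<tau>)"
    unfolding kernel using int by (intro Bochner_Integration.integral_diff integrable_mult_right) auto
  also have "\<dots> = z * complex_of_real (measure \<tau> (space \<tau>)) - (1 + z\<^sup>2) * cauchy_G \<tau> z"
    unfolding cauchy_G_def by (simp add: scaleR_conv_of_real del: times_divide_eq_right)
  finally show ?thesis unfolding gen_A_def by simp
qed

definition commutes_with_reflection :: "(complex \<Rightarrow> complex) \<Rightarrow> bool" where
  "commutes_with_reflection f \<longleftrightarrow> (\<forall>z. Im z > 0 \<longrightarrow> f (- cnj z) = - cnj (f z))"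

lemma gen_A_reflect_eq_iff:
  assumes "finite_measure \<tau>" "sets \<tau> = sets borel" "Im z > 0"
  shows "gen_A \<gamma> \<tau> (- cnj z) = - cnj (gen_A \<gamma> \<tau> z) \<longleftrightarrow>
    - complex_of_real \<gamma> + (1 + z\<^sup>2) * cauchy_G (reflect_measure \<tau>) z
      = complex_of_real \<gamma> + (1 + z\<^sup>2) * cauchy_G \<tau> z"
proof -
  define m where "m = complex_of_real (measure \<tau> (space \<tau>))"
  have "Im (- cnj z) \<noteq> 0" "Im z \<noteq> 0" using assms(3) by simp_all
  have "gen_A \<gamma> \<tau> (- cnj z) = - cnj (gen_A \<gamma> \<tau> z) \<longleftrightarrow> cnj (gen_A \<gamma> \<tau> (- cnj z)) = - gen_A \<gamma> \<tau> z"
    by (auto dest: arg_cong[where f = cnj])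
  also have "cnj (gen_A \<gamma> \<tau> (- cnj z))
      = - complex_of_real \<gamma> - z * m + (1 + z\<^sup>2) * cauchy_G (reflect_measure \<tau>) z"
    by (simp add: gen_A_eq[OF assms(1,2) \<open>Im (- cnj z) \<noteq> 0\<close>] cauchy_G_reflect_measure[OF assms(2)] m_def)
  also have "- gen_A \<gamma> \<tau> z = complex_of_real \<gamma> - z * m + (1 + z\<^sup>2) * cauchy_G \<tau> z"
    by (simp add: gen_A_eq[OF assms(1,2) \<open>Im z \<noteq> 0\<close>] m_def)
  finally show ?thesis
    by (simp add: diff_add_eq[symmetric] add.commute[of "- (z * m)"] del: diff_add_eq)
qed

lemma gen_A_commutes_with_reflection_iff:
  assumes "finite_measure \<tau>" "sets \<tau> = sets borel"
  shows "commutes_with_reflection (gen_A \<gamma> \<tau>) \<longleftrightarrow> \<gamma> = 0 \<and> symmetric_measure \<tau>"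
proof
  assume "commutes_with_reflection (gen_A \<gamma> \<tau>)"
  then have key: "- complex_of_real \<gamma> + (1 + z\<^sup>2) * cauchy_G (reflect_measure \<tau>) z
      = complex_of_real \<gamma> + (1 + z\<^sup>2) * cauchy_G \<tau> z" if "Im z > 0" for z
    using gen_A_reflect_eq_iff[OF assms that] that
    unfolding commutes_with_reflection_def by blast
  text \<open>At \<open>z = \<i>\<close> the factor \<open>1 + z\<^sup>2\<close> vanishes.\<close>
  from key[of \<i>] have "\<gamma> = 0" by simp
  have "cauchy_G (reflect_measure \<tau>) z = cauchy_G \<tau> z" if "Im z > 1" for z
  proof -
    have "1 + z\<^sup>2 = (z - \<i>) * (z + \<i>)"
      by (simp add: algebra_simps power2_eq_square)
    moreover have "z \<noteq> \<i>" "z \<noteq> - \<i>" using that by auto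
    ultimately have "1 + z\<^sup>2 \<noteq> 0"
      by (simp add: add_eq_0_iff2)
    then show ?thesis using key[of z] that \<open>\<gamma> = 0\<close> by simp
  qed
  then have "reflect_measure \<tau> = \<tau>"
    using assms by (intro measure_eq_if_cauchy_G_eq_above finite_measure_reflect_measure) auto
  with \<open>\<gamma> = 0\<close> show "\<gamma> = 0 \<and> symmetric_measure \<tau>"
    by (simp add: symmetric_measure_iff_reflect_eq[OF assms(2)])
next
  assume "\<gamma> = 0 \<and> symmetric_measure \<tau>"
  then show "commutes_with_reflection (gen_A \<gamma> \<tau>)"
    using gen_A_reflect_eq_iff[OF assms] symmetric_measure_iff_reflect_eq[OF assms(2)]
    by (simp add: commutes_with_reflection_def)
qed

lemma norm_cauchy_G_le:
  assumes "finite_measure M" "sets M = sets borel" "Im w \<ge> c" "c > 0"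
  shows "cmod (cauchy_G M w) \<le> measure M (space M) / c"
proof -
  interpret finite_measure M by fact
  have "Im w \<noteq> 0" using assms(3,4) by simp
  have "cmod (cauchy_G M w) \<le> (\<integral>x. cmod (1 / (w - complex_of_real x)) \<partial>M)"
    unfolding cauchy_G_def by (rule integral_norm_bound)
  also have "\<dots> \<le> (\<integral>x. 1 / c \<partial>M)"
  proof (rule integral_mono)
    show "cmod (1 / (w - complex_of_real x)) \<le> 1 / c" for x
      using norm_cauchy_kernel_le[OF \<open>Im w \<noteq> 0\<close>, of x] assms(3,4)
      by (smt (verit) frac_le)
  qed (use integrable_cauchy_kernel[OF assms(1,2) \<open>Im w \<noteq> 0\<close>] in auto)
  finally show ?thesis by simp
qed

lemma norm_cauchy_G_diff_le:
  assumes "finite_measure M" "sets M = sets borel" "Im w1 \<ge> c" "Im w2 \<ge> c" "c > 0"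
  shows "cmod (cauchy_G M w1 - cauchy_G M w2) \<le> measure M (space M) / c\<^sup>2 * cmod (w1 - w2)"
proof -
  interpret finite_measure M by fact
  have "Im w1 \<noteq> 0" "Im w2 \<noteq> 0" using assms(3-5) by auto
  note int = integrable_cauchy_kernel[OF assms(1,2) \<open>Im w1 \<noteq> 0\<close>] integrable_cauchy_kernel[OF assms(1,2) \<open>Im w2 \<noteq> 0\<close>]
  have "cauchy_G M w1 - cauchy_G M w2 = (\<integral>x. 1 / (w1 - complex_of_real x) - 1 / (w2 - complex_of_real x) \<partial>M)"
    unfolding cauchy_G_def using int by simp
  also have "cmod \<dots> \<le> (\<integral>x. cmod (1 / (w1 - complex_of_real x) - 1 / (w2 - complex_of_real x)) \<partial>M)"
    by (rule integral_norm_bound)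
  also have "\<dots> \<le> (\<integral>x. cmod (w1 - w2) / c\<^sup>2 \<partial>M)"
  proof (rule integral_mono)
    fix x
    have lower: "cmod (w1 - complex_of_real x) \<ge> c" "cmod (w2 - complex_of_real x) \<ge> c"
      using abs_Im_le_cmod[of "w1 - complex_of_real x"] abs_Im_le_cmod[of "w2 - complex_of_real x"] assms(3,4)
      by auto
    then have "w1 - complex_of_real x \<noteq> 0" "w2 - complex_of_real x \<noteq> 0"
      using assms(5) by auto
    then have "1 / (w1 - complex_of_real x) - 1 / (w2 - complex_of_real x)
        = (w2 - w1) / ((w1 - complex_of_real x) * (w2 - complex_of_real x))"
      by (simp add: field_simps)
    then have "cmod (1 / (w1 - complex_of_real x) - 1 / (w2 - complex_of_real x))
        = cmod (w1 - w2) / (cmod (w1 - complex_of_real x) * cmod (w2 - complex_of_real x))"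
      by (simp add: norm_divide norm_mult norm_minus_commute)
    also have "\<dots> \<le> cmod (w1 - w2) / (c * c)"
      using lower assms(5) by (intro divide_left_mono mult_mono mult_pos_pos) auto
    finally show "cmod (1 / (w1 - complex_of_real x) - 1 / (w2 - complex_of_real x)) \<le> cmod (w1 - w2) / c\<^sup>2"
      by (simp add: power2_eq_square)
  qed (use int in auto)
  finally show ?thesis by simp
qed

lemma norm_gen_A_diff_le:
  assumes "finite_measure \<tau>" "sets \<tau> = sets borel" "c > 0"
    and "Im w1 \<ge> c" "Im w2 \<ge> c" "cmod w1 \<le> R" "cmod w2 \<le> R"
  shows "cmod (gen_A \<gamma> \<tau> w1 - gen_A \<gamma> \<tau> w2)
    \<le> (measure \<tau> (space \<tau>) * (1 + 2 * R / c + (1 + R\<^sup>2) / c\<^sup>2)) * cmod (w1 - w2)"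
proof -
  define m where "m = measure \<tau> (space \<tau>)"
  define G1 where "G1 = cauchy_G \<tau> w1"
  define G2 where "G2 = cauchy_G \<tau> w2"
  have "Im w1 \<noteq> 0" "Im w2 \<noteq> 0" using assms(3-5) by auto
  have "R \<ge> 0" using assms(6) norm_ge_zero order_trans by blast
  have "gen_A \<gamma> \<tau> w1 - gen_A \<gamma> \<tau> w2
      = (w1 - w2) * complex_of_real m - ((w1 - w2) * (w1 + w2)) * G1 - (1 + w2\<^sup>2) * (G1 - G2)"
    by (simp add: gen_A_eq[OF assms(1,2) \<open>Im w1 \<noteq> 0\<close>] gen_A_eq[OF assms(1,2) \<open>Im w2 \<noteq> 0\<close>]
        m_def G1_def G2_def algebra_simps power2_eq_square)
  also have "cmod \<dots> \<le> cmod ((w1 - w2) * complex_of_real m) + cmod (((w1 - w2) * (w1 + w2)) * G1)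
      + cmod ((1 + w2\<^sup>2) * (G1 - G2))"
    by (rule order_trans[OF norm_triangle_ineq4 add_right_mono[OF norm_triangle_ineq4]])
  also have "\<dots> \<le> cmod (w1 - w2) * m + cmod (w1 - w2) * (2 * R) * (m / c) + (1 + R\<^sup>2) * (m / c\<^sup>2 * cmod (w1 - w2))"
  proof (intro add_mono)
    have "cmod (w1 + w2) \<le> 2 * R" using norm_triangle_ineq[of w1 w2] assms(6,7) by simp
    moreover have "cmod G1 \<le> m / c"
      unfolding G1_def m_def by (rule norm_cauchy_G_le[OF assms(1,2,4,3)])
    ultimately show "cmod ((w1 - w2) * (w1 + w2) * G1) \<le> cmod (w1 - w2) * (2 * R) * (m / c)"
      unfolding norm_mult using \<open>R \<ge> 0\<close> by (intro mult_mono) auto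
    have "cmod (1 + w2\<^sup>2) \<le> 1 + R\<^sup>2"
      using norm_triangle_ineq[of 1 "w2\<^sup>2"] power_mono[OF assms(7) norm_ge_zero, of 2] by (simp add: norm_power)
    moreover have "cmod (G1 - G2) \<le> m / c\<^sup>2 * cmod (w1 - w2)"
      unfolding G1_def G2_def m_def by (rule norm_cauchy_G_diff_le[OF assms(1,2,4,5,3)])
    ultimately show "cmod ((1 + w2\<^sup>2) * (G1 - G2)) \<le> (1 + R\<^sup>2) * (m / c\<^sup>2 * cmod (w1 - w2))"
      unfolding norm_mult by (intro mult_mono) auto
  qed (simp add: norm_mult m_def)
  also have "\<dots> = (m * (1 + 2 * R / c + (1 + R\<^sup>2) / c\<^sup>2)) * cmod (w1 - w2)"
    by (simp add: algebra_simps)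
  finally show ?thesis by (simp add: m_def)
qed

lemma gen_A_lipschitz_on_compact:
  assumes "finite_measure \<tau>" "sets \<tau> = sets borel" "compact K" "K \<subseteq> {z. Im z > 0}"
  shows "\<exists>L. L-lipschitz_on K (gen_A \<gamma> \<tau>)"
proof (cases "K = {}")
  case False
  obtain k where "k \<in> K" and k_min: "\<And>w. w \<in> K \<Longrightarrow> Im k \<le> Im w"
    using continuous_attains_inf[OF assms(3) False continuous_on_Im[OF continuous_on_id]] by auto
  obtain R where R: "\<And>w. w \<in> K \<Longrightarrow> cmod w \<le> R"
    using compact_imp_bounded[OF assms(3)] by (auto simp: bounded_iff)
  have "Im k > 0" using \<open>k \<in> K\<close> assms(4) by auto
  define L where "L = measure \<tau> (space \<tau>) * (1 + 2 * R / Im k + (1 + R\<^sup>2) / (Im k)\<^sup>2)"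
  have "L-lipschitz_on K (gen_A \<gamma> \<tau>)"
  proof (rule lipschitz_onI)
    show "dist (gen_A \<gamma> \<tau> w1) (gen_A \<gamma> \<tau> w2) \<le> L * dist w1 w2" if "w1 \<in> K" "w2 \<in> K" for w1 w2
      unfolding dist_norm L_def
      by (rule norm_gen_A_diff_le[OF assms(1,2) \<open>Im k > 0\<close>]) (use that k_min R in auto)
    show "0 \<le> L"
      using R[OF \<open>k \<in> K\<close>] \<open>Im k > 0\<close> unfolding L_def
      by (intro mult_nonneg_nonneg add_nonneg_nonneg divide_nonneg_nonneg)
         (auto intro: order_trans[OF norm_ge_zero])
  qed
  then show ?thesis ..
qed (auto intro: lipschitz_onI[of 0])

section \<open>Uniqueness for a locally Lipschitz autonomous equation\<close>

lemma zero_if_norm_derivative_le_short: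
  fixes Z :: "real \<Rightarrow> 'a::real_normed_vector"
  assumes deriv: "\<And>t. t \<in> {a..b} \<Longrightarrow> (Z has_vector_derivative Z' t) (at t within {a..b})"
    and bound: "\<And>t. t \<in> {a..b} \<Longrightarrow> norm (Z' t) \<le> L * norm (Z t)"
    and "L \<ge> 0" "Z a = 0" "L * (b - a) < 1" "t \<in> {a..b}"
  shows "Z t = 0"
proof -
  have "continuous_on {a..b} (\<lambda>t. norm (Z t))"
    using continuous_on_vector_derivative[OF deriv] by (intro continuous_on_norm)
  moreover have "{a..b} \<noteq> {}" using \<open>t \<in> {a..b}\<close> by auto
  ultimately obtain s where s: "s \<in> {a..b}" and s_max: "\<And>t. t \<in> {a..b} \<Longrightarrow> norm (Z t) \<le> norm (Z s)"
    using continuous_attains_sup[OF compact_Icc] by blast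
  have onorm_scaleR: "onorm (\<lambda>h::real. h *\<^sub>R v) = norm v" for v :: 'a
    using onorm_scaleR_left[OF bounded_linear_ident, of v] by (simp add: onorm_id)
  have "norm (Z s - Z a) \<le> (L * norm (Z s)) * norm (s - a)"
  proof (rule differentiable_bound[where f' = "\<lambda>t h. h *\<^sub>R Z' t"])
    show "(Z has_derivative (\<lambda>h. h *\<^sub>R Z' x)) (at x within {a..b})" if "x \<in> {a..b}" for x
      using deriv[OF that] by (simp add: has_vector_derivative_def)
    show "onorm (\<lambda>h. h *\<^sub>R Z' x) \<le> L * norm (Z s)" if "x \<in> {a..b}" for x
      unfolding onorm_scaleR
      using bound[OF that] mult_left_mono[OF s_max[OF that] \<open>L \<ge> 0\<close>] by linarith
  qed (use s in auto)
  also have "\<dots> \<le> (L * norm (Z s)) * (b - a)"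
    using s \<open>L \<ge> 0\<close> by (intro mult_left_mono) auto
  finally have "norm (Z s) * (1 - L * (b - a)) \<le> 0"
    using \<open>Z a = 0\<close> by (simp add: algebra_simps)
  then have "norm (Z s) = 0"
    using \<open>L * (b - a) < 1\<close> by (simp add: mult_le_0_iff)
  then show ?thesis using s_max[OF \<open>t \<in> {a..b}\<close>] by simp
qed

lemma zero_if_norm_derivative_le:
  fixes Z :: "real \<Rightarrow> 'a::real_normed_vector"
  assumes deriv: "\<And>t. t \<in> {0..T} \<Longrightarrow> (Z has_vector_derivative Z' t) (at t within {0..T})"
    and bound: "\<And>t. t \<in> {0..T} \<Longrightarrow> norm (Z' t) \<le> L * norm (Z t)"
    and "L \<ge> 0" "Z 0 = 0" "t \<in> {0..T}"
  shows "Z t = 0"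
proof -
  define h where "h = 1 / (L + 1)"
  have "h > 0" "L * h < 1" using \<open>L \<ge> 0\<close> by (simp_all add: h_def)
  have vanishes: "\<forall>t \<in> {0..T}. t \<le> real k * h \<longrightarrow> Z t = 0" for k
  proof (induction k)
    case 0
    then show ?case using \<open>Z 0 = 0\<close> by auto
  next
    case (Suc k)
    show ?case
    proof (intro ballI impI)
      fix t assume t: "t \<in> {0..T}" "t \<le> real (Suc k) * h"
      show "Z t = 0"
      proof (cases "t \<le> real k * h")
        case False
        let ?a = "real k * h"
        have sub: "{?a..t} \<subseteq> {0..T}" using t \<open>h > 0\<close> by auto
        show ?thesis
        proof (rule zero_if_norm_derivative_le_short[where a = ?a and b = t and Z' = Z' and L = L])
          show "(Z has_vector_derivative Z' s) (at s within {?a..t})" if "s \<in> {?a..t}" for s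
            using deriv sub that by (blast intro: has_vector_derivative_within_subset)
          show "Z ?a = 0" using Suc.IH sub False by auto
          have "L * (t - ?a) \<le> L * h" using t \<open>L \<ge> 0\<close> by (intro mult_left_mono) (auto simp: algebra_simps)
          then show "L * (t - ?a) < 1" using \<open>L * h < 1\<close> by simp
        qed (use bound sub \<open>L \<ge> 0\<close> False in auto)
      qed (use Suc.IH t in auto)
    qed
  qed
  obtain k :: nat where "T / h < real k" using reals_Archimedean2 by blast
  then have "T \<le> real k * h" using \<open>h > 0\<close> by (simp add: field_simps)
  then show ?thesis using vanishes[of k] \<open>t \<in> {0..T}\<close> by auto
qed

lemma ode_solution_unique:
  fixes X Y :: "real \<Rightarrow> 'a::real_normed_vector"
  assumes X: "\<And>t. t \<ge> 0 \<Longrightarrow> (X has_vector_derivative F (X t)) (at t within {0..})"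
    and Y: "\<And>t. t \<ge> 0 \<Longrightarrow> (Y has_vector_derivative F (Y t)) (at t within {0..})"
    and "X 0 = Y 0"
    and X_in: "\<And>t. t \<ge> 0 \<Longrightarrow> X t \<in> U" and Y_in: "\<And>t. t \<ge> 0 \<Longrightarrow> Y t \<in> U"
    and lipschitz: "\<And>K. compact K \<Longrightarrow> K \<subseteq> U \<Longrightarrow> \<exists>L. L-lipschitz_on K F"
    and "T \<ge> 0"
  shows "X T = Y T"
proof -
  have X_T: "(X has_vector_derivative F (X t)) (at t within {0..T})"
    and Y_T: "(Y has_vector_derivative F (Y t)) (at t within {0..T})" if "t \<in> {0..T}" for t
    using has_vector_derivative_within_subset[OF X, of t "{0..T}"]
      has_vector_derivative_within_subset[OF Y, of t "{0..T}"] that by auto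
  define K where "K = X ` {0..T} \<union> Y ` {0..T}"
  have "compact K"
    unfolding K_def using continuous_on_vector_derivative[OF X_T] continuous_on_vector_derivative[OF Y_T]
    by (intro compact_Un compact_continuous_image) auto
  moreover have "K \<subseteq> U" using X_in Y_in by (auto simp: K_def)
  ultimately obtain L where L: "L-lipschitz_on K F" using lipschitz by blast
  have "(\<lambda>t. X t - Y t) T = 0"
  proof (rule zero_if_norm_derivative_le[where Z' = "\<lambda>t. F (X t) - F (Y t)" and L = L])
    show "((\<lambda>t. X t - Y t) has_vector_derivative F (X t) - F (Y t)) (at t within {0..T})"
      if "t \<in> {0..T}" for t
      using X_T[OF that] Y_T[OF that] by (rule has_vector_derivative_diff)
    show "norm (F (X t) - F (Y t)) \<le> L * norm (X t - Y t)" if "t \<in> {0..T}" for t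
      using that by (intro lipschitz_on_normD[OF L]) (auto simp: K_def)
  qed (use \<open>X 0 = Y 0\<close> \<open>T \<ge> 0\<close> lipschitz_on_nonneg[OF L] in auto)
  then show ?thesis by simp
qed

section \<open>Symmetry along the semigroup and of the generator\<close>

lemma monotone_conv_semigroupD:
  assumes "monotone_conv_semigroup \<mu>" "t \<ge> 0"
  shows "prob_space (\<mu> t)" "sets (\<mu> t) = sets borel"
  using assms unfolding monotone_conv_semigroup_def real_prob_measure_def by auto

lemma finite_measure_semigroup:
  assumes "monotone_conv_semigroup \<mu>" "t \<ge> 0"
  shows "finite_measure (\<mu> t)"
  using monotone_conv_semigroupD[OF assms] by (simp add: prob_space_def)

lemma cauchy_H_semigroup_double:
  assumes "monotone_conv_semigroup \<mu>" "s \<ge> 0" "Im z > 0"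
  shows "cauchy_H (\<mu> (s + s)) z = cauchy_H (\<mu> s) (cauchy_H (\<mu> s) z)"
  using assms unfolding monotone_conv_semigroup_def is_monotone_conv_def by blast

lemma associated_pairD:
  assumes "associated_pair \<mu> \<gamma> \<tau>"
  shows "finite_measure \<tau>" "sets \<tau> = sets borel"
    and "Im z \<noteq> 0 \<Longrightarrow> cauchy_H (\<mu> 0) z = z"
    and "Im z \<noteq> 0 \<Longrightarrow> t \<ge> 0 \<Longrightarrow>
      ((\<lambda>s. cauchy_H (\<mu> s) z) has_vector_derivative gen_A \<gamma> \<tau> (cauchy_H (\<mu> t) z)) (at t within {0..})"
  using assms unfolding associated_pair_def by auto

lemma tendsto_difference_quotient_at_0:
  fixes f :: "real \<Rightarrow> complex"
  assumes "(f has_vector_derivative D) (at 0 within {0..})" "t \<longlonglongrightarrow> 0" "\<And>n. t n > 0"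
  shows "(\<lambda>n. (f (t n) - f 0) / complex_of_real (t n)) \<longlonglongrightarrow> D"
proof -
  have "((\<lambda>y. (1 / norm (y - 0)) *\<^sub>R (f y - (f 0 + (y - 0) *\<^sub>R D))) \<longlongrightarrow> 0) (at 0 within {0..})"
    using assms(1) unfolding has_vector_derivative_def has_derivative_within by simp
  moreover have "filterlim t (at 0 within {0..}) sequentially"
    unfolding filterlim_at using assms(2,3)
    by (auto intro!: always_eventually less_imp_le simp: less_imp_neq[symmetric])
  ultimately have "(\<lambda>n. (1 / norm (t n - 0)) *\<^sub>R (f (t n) - (f 0 + (t n - 0) *\<^sub>R D))) \<longlonglongrightarrow> 0"
    by (rule filterlim_compose)
  moreover have "(1 / norm (t n - 0)) *\<^sub>R (f (t n) - (f 0 + (t n - 0) *\<^sub>R D))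
      = (f (t n) - f 0) / complex_of_real (t n) - D" for n
    using assms(3)[of n] by (simp add: scaleR_conv_of_real field_simps)
  ultimately show ?thesis by (simp add: LIM_zero_iff)
qed

text \<open>The generator is the derivative of \<open>H\<^sub>t\<close> at \<open>t = 0\<close>, so it inherits the symmetry of
  \<open>\<mu>\<^sub>t\<close> along any sequence \<open>t\<^sub>n \<rightarrow> 0\<close>.\<close>
lemma gen_A_commutes_with_reflection_if_symmetric_seq:
  assumes sg: "monotone_conv_semigroup \<mu>" and ap: "associated_pair \<mu> \<gamma> \<tau>"
    and "t \<longlonglongrightarrow> 0" "\<And>n. t n > 0" and sym: "\<And>n. symmetric_measure (\<mu> (t n))"
  shows "commutes_with_reflection (gen_A \<gamma> \<tau>)"
  unfolding commutes_with_reflection_def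
proof (intro allI impI)
  fix z :: complex assume "Im z > 0"
  have quotient: "(\<lambda>n. (cauchy_H (\<mu> (t n)) w - w) / complex_of_real (t n)) \<longlonglongrightarrow> gen_A \<gamma> \<tau> w"
    if "Im w \<noteq> 0" for w
    using tendsto_difference_quotient_at_0[OF associated_pairD(4)[OF ap that order_refl] assms(3,4)]
    by (simp add: associated_pairD(3)[OF ap that])
  have "cauchy_H (\<mu> (t n)) (- cnj z) = - cnj (cauchy_H (\<mu> (t n)) z)" for n
    using sym monotone_conv_semigroupD(2)[OF sg less_imp_le[OF assms(4)]]
    by (rule cauchy_H_symmetric_measure)
  then have "(\<lambda>n. (cauchy_H (\<mu> (t n)) (- cnj z) - (- cnj z)) / complex_of_real (t n))
      = (\<lambda>n. - cnj ((cauchy_H (\<mu> (t n)) z - z) / complex_of_real (t n)))"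
    by (simp add: minus_divide_left)
  moreover have "\<dots> \<longlonglongrightarrow> - cnj (gen_A \<gamma> \<tau> z)"
    using \<open>Im z > 0\<close> by (intro tendsto_intros quotient) simp
  ultimately have "(\<lambda>n. (cauchy_H (\<mu> (t n)) (- cnj z) - (- cnj z)) / complex_of_real (t n))
      \<longlonglongrightarrow> - cnj (gen_A \<gamma> \<tau> z)"
    by simp
  moreover have "Im (- cnj z) \<noteq> 0" using \<open>Im z > 0\<close> by simp
  ultimately show "gen_A \<gamma> \<tau> (- cnj z) = - cnj (gen_A \<gamma> \<tau> z)"
    using quotient LIMSEQ_unique by blast
qed

text \<open>If the generator commutes with \<open>z \<mapsto> - cnj z\<close>, then \<open>t \<mapsto> - cnj (H\<^sub>t (- cnj z))\<close> solves
  the same equation as \<open>t \<mapsto> H\<^sub>t z\<close> with the same initial value.\<close>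
lemma symmetric_measure_if_gen_A_commutes_with_reflection:
  assumes sg: "monotone_conv_semigroup \<mu>" and ap: "associated_pair \<mu> \<gamma> \<tau>"
    and commutes: "commutes_with_reflection (gen_A \<gamma> \<tau>)" and "T \<ge> 0"
  shows "symmetric_measure (\<mu> T)"
proof -
  note H_deriv = associated_pairD(4)[OF ap]
  have Im_H: "Im (cauchy_H (\<mu> t) w) > 0" if "t \<ge> 0" "Im w > 0" for t w
    using monotone_conv_semigroupD[OF sg that(1)] that(2) by (rule Im_cauchy_H_pos)
  have "cauchy_H (\<mu> T) z = - cnj (cauchy_H (\<mu> T) (- cnj z))" if "Im z > 0" for z
  proof (rule ode_solution_unique[where F = "gen_A \<gamma> \<tau>" and U = "{w. Im w > 0}"])
    show "((\<lambda>s. cauchy_H (\<mu> s) z) has_vector_derivative gen_A \<gamma> \<tau> (cauchy_H (\<mu> t) z)) (at t within {0..})"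
      if "t \<ge> 0" for t
      using H_deriv[of z t] \<open>Im z > 0\<close> that by simp
    show "((\<lambda>s. - cnj (cauchy_H (\<mu> s) (- cnj z))) has_vector_derivative
        gen_A \<gamma> \<tau> (- cnj (cauchy_H (\<mu> t) (- cnj z)))) (at t within {0..})" if "t \<ge> 0" for t
    proof -
      have "((\<lambda>s. - cnj (cauchy_H (\<mu> s) (- cnj z))) has_vector_derivative
          - cnj (gen_A \<gamma> \<tau> (cauchy_H (\<mu> t) (- cnj z)))) (at t within {0..})"
        using H_deriv[of "- cnj z" t] \<open>Im z > 0\<close> that
        by (intro has_vector_derivative_minus has_vector_derivative_cnj) simp
      also have "- cnj (gen_A \<gamma> \<tau> (cauchy_H (\<mu> t) (- cnj z))) = gen_A \<gamma> \<tau> (- cnj (cauchy_H (\<mu> t) (- cnj z)))"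
        using commutes Im_H[OF that, of "- cnj z"] \<open>Im z > 0\<close> by (simp add: commutes_with_reflection_def)
      finally show ?thesis .
    qed
    show "cauchy_H (\<mu> 0) z = - cnj (cauchy_H (\<mu> 0) (- cnj z))"
      using associated_pairD(3)[OF ap, of z] associated_pairD(3)[OF ap, of "- cnj z"] \<open>Im z > 0\<close> by simp
    show "\<exists>L. L-lipschitz_on K (gen_A \<gamma> \<tau>)" if "compact K" "K \<subseteq> {w. Im w > 0}" for K
      using gen_A_lipschitz_on_compact[OF associated_pairD(1,2)[OF ap] that] .
  qed (use Im_H \<open>Im z > 0\<close> \<open>T \<ge> 0\<close> in auto)
  then have "cauchy_H (\<mu> T) z = cauchy_H (reflect_measure (\<mu> T)) z" if "Im z > 0" for z
    using that by (simp only: cauchy_H_reflect_measure[OF monotone_conv_semigroupD(2)[OF sg \<open>T \<ge> 0\<close>]])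
  then have "\<mu> T = reflect_measure (\<mu> T)"
    using finite_measure_semigroup[OF sg \<open>T \<ge> 0\<close>] monotone_conv_semigroupD(2)[OF sg \<open>T \<ge> 0\<close>]
    by (intro measure_eq_if_cauchy_H_eq_above[where c = 0] finite_measure_reflect_measure) auto
  then show ?thesis
    using symmetric_measure_iff_reflect_eq[OF monotone_conv_semigroupD(2)[OF sg \<open>T \<ge> 0\<close>]] by simp
qed

section \<open>Compactly supported measures: the expansion of \<open>H\<close> at infinity\<close>

lemma AE_abs_le_if_compact_support:
  assumes "sets M = sets borel" "compact (measure_support M)"
  shows "\<exists>R>0. AE x in M. \<bar>x\<bar> \<le> R"
proof -
  obtain R where R: "\<And>x. x \<in> measure_support M \<Longrightarrow> norm x \<le> R"
    using compact_imp_bounded[OF assms(2)] unfolding bounded_iff by blast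
  define \<F> where "\<F> = {ball x e | x e. e > 0 \<and> emeasure M (ball x e) = 0}"
  text \<open>The complement of the support is a countable union of null balls (Lindelof).\<close>
  obtain \<F>' where \<F>': "\<F>' \<subseteq> \<F>" "countable \<F>'" "\<Union>\<F>' = \<Union>\<F>"
    using Lindelof[of \<F>] unfolding \<F>_def by auto
  have "\<Union>\<F>' \<in> null_sets M"
  proof -
    have "B \<in> null_sets M" if "B \<in> \<F>'" for B
      using that \<F>'(1) assms(1) by (auto simp: \<F>_def null_sets_def)
    then have "(\<Union>B\<in>\<F>'. B) \<in> null_sets M" by (rule null_sets_UN'[OF \<F>'(2)])
    then show ?thesis by simp
  qed
  then have "AE x in M. x \<notin> \<Union>\<F>'" by (rule AE_not_in)
  then have "AE x in M. \<bar>x\<bar> \<le> \<bar>R\<bar> + 1"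
  proof eventually_elim
    case (elim x)
    have "x \<in> measure_support M"
    proof (rule ccontr)
      assume "x \<notin> measure_support M"
      then obtain e where "e > 0" "emeasure M (ball x e) = 0"
        unfolding measure_support_def by (auto simp: zero_less_iff_neq_zero)
      then have "x \<in> \<Union>\<F>" unfolding \<F>_def by force
      then show False using elim \<F>'(3) by simp
    qed
    then show ?case using R[of x] by simp
  qed
  then show ?thesis by (intro exI[of _ "\<bar>R\<bar> + 1"]) auto
qed

lemma norm_integral_minus_1_le:
  fixes f :: "'a \<Rightarrow> complex"
  assumes "prob_space M" "f \<in> borel_measurable M" "AE x in M. cmod (f x - 1) \<le> \<epsilon>"
  shows "cmod ((\<integral>x. f x \<partial>M) - 1) \<le> \<epsilon>"
proof -
  interpret prob_space M by fact
  have int: "integrable M (\<lambda>x. f x - 1)"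
    using assms(2,3) by (intro integrable_const_bound[where B = \<epsilon>]) auto
  then have "integrable M f"
    using Bochner_Integration.integrable_add[OF int integrable_const[of 1]] by simp
  then have "(\<integral>x. f x \<partial>M) - 1 = (\<integral>x. f x - 1 \<partial>M)"
    by (simp add: prob_space)
  also have "cmod \<dots> \<le> (\<integral>x. cmod (f x - 1) \<partial>M)"
    by (rule integral_norm_bound)
  also have "\<dots> \<le> (\<integral>x. \<epsilon> \<partial>M)"
    using int assms(3) by (intro integral_mono_AE) auto
  finally show ?thesis by (simp add: prob_space)
qed

text \<open>\<open>moment_transform M u = G(1/u)/u\<close> is the generating function of the moments of \<open>M\<close>.\<close>
definition moment_transform :: "real measure \<Rightarrow> complex \<Rightarrow> complex" where
  "moment_transform M u = (\<integral>x. 1 / (1 - complex_of_real x * u) \<partial>M)"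

lemma cauchy_H_eq_moment_transform:
  assumes "z \<noteq> 0"
  shows "cauchy_H M z = z / moment_transform M (1 / z)"
proof -
  have "1 / (z - complex_of_real x) = 1 / (1 - complex_of_real x * (1 / z)) / z" for x
    using assms by (cases "z = complex_of_real x") (simp_all add: field_simps)
  then have "cauchy_G M z = (\<integral>x. 1 / (1 - complex_of_real x * (1 / z)) / z \<partial>M)"
    unfolding cauchy_G_def by simp
  also have "\<dots> = moment_transform M (1 / z) / z"
    unfolding moment_transform_def by (rule integral_divide_zero)
  finally show ?thesis unfolding cauchy_H_def by simp
qed

lemma norm_of_real_mult_le:
  assumes "\<bar>x\<bar> \<le> R" "cmod u \<le> r / R" "R > 0"
  shows "cmod (complex_of_real x * u) \<le> r"
proof -
  have "cmod (complex_of_real x * u) \<le> R * (r / R)"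
    unfolding norm_mult using assms by (intro mult_mono) auto
  then show ?thesis using assms(3) by simp
qed

lemma moment_transform_holomorphic:
  assumes "prob_space M" "sets M = sets borel" and bounded: "AE x in M. \<bar>x\<bar> \<le> R" and "R > 0"
  shows "moment_transform M holomorphic_on ball 0 (1 / (2 * R))"
proof -
  have "moment_transform M field_differentiable at u0" if u0: "u0 \<in> ball 0 (1 / (2 * R))" for u0
  proof -
    define d where "d = 1 / (2 * R) - cmod u0"
    have "((\<lambda>u. \<integral>x. 1 / (complex_of_real 1 + complex_of_real (- x) * u) \<partial>M) has_field_derivative
          (\<integral>x. - complex_of_real (- x) / (complex_of_real 1 + complex_of_real (- x) * u0)\<^sup>2 \<partial>M)) (at u0)"
    proof (rule has_field_derivative_integral_inverse_affine[where p = "\<lambda>_. 1" and q = uminus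
          and Q = R and d = d and c = "1 / 2"])
      fix u assume "u \<in> ball u0 d"
      then have "cmod u \<le> (1 / 2) / R"
        using norm_triangle_ineq[of u0 "u - u0"] by (simp add: d_def dist_norm norm_minus_commute)
      then have lower: "1 / 2 \<le> cmod (1 - complex_of_real x * u)" if "\<bar>x\<bar> \<le> R" for x
        using norm_of_real_mult_le[OF that _ \<open>R > 0\<close>] norm_triangle_ineq2[of 1 "complex_of_real x * u"]
        by fastforce
      show "AE x in M. 1 / 2 \<le> cmod (complex_of_real 1 + complex_of_real (- x) * u)"
        using bounded by (rule eventually_mono) (metis lower diff_conv_add_uminus mult_minus_left of_real_1 of_real_minus)
    qed (use assms u0 in \<open>auto simp: d_def prob_space_def\<close>)
    then show ?thesis
      unfolding moment_transform_def field_differentiable_def by (auto simp: algebra_simps)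
  qed
  then show ?thesis by (simp add: holomorphic_on_def field_differentiable_at_within)
qed

lemma norm_moment_transform_minus_1_le:
  assumes "prob_space M" "sets M = sets borel" and bounded: "AE x in M. \<bar>x\<bar> \<le> R" and "R > 0"
    and "cmod u \<le> 1 / (4 * R)"
  shows "cmod (moment_transform M u - 1) \<le> 1 / 2"
proof -
  have "cmod (1 / (1 - complex_of_real x * u) - 1) \<le> 1 / 2" if "\<bar>x\<bar> \<le> R" for x
  proof -
    have small: "cmod (complex_of_real x * u) \<le> 1 / 4"
      using norm_of_real_mult_le[OF that _ \<open>R > 0\<close>, of u "1 / 4"] assms(5) by simp
    then have lower: "cmod (1 - complex_of_real x * u) \<ge> 3 / 4"
      using norm_triangle_ineq2[of 1 "complex_of_real x * u"] by simp
    then have "1 - complex_of_real x * u \<noteq> 0" by auto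
    then have "1 / (1 - complex_of_real x * u) - 1 = complex_of_real x * u / (1 - complex_of_real x * u)"
      by (simp add: field_simps)
    also have "cmod \<dots> \<le> (1 / 4) / (3 / 4)"
      unfolding norm_divide using lower small by (intro frac_le) auto
    finally show ?thesis by simp
  qed
  then show ?thesis
    unfolding moment_transform_def using bounded
    by (intro norm_integral_minus_1_le[OF assms(1)])
       (auto simp: measurable_cong_sets[OF assms(2) refl] elim!: eventually_mono)
qed

lemma moment_transform_nonzero:
  assumes "prob_space M" "sets M = sets borel" "AE x in M. \<bar>x\<bar> \<le> R" "R > 0" "cmod u \<le> 1 / (4 * R)"
  shows "moment_transform M u \<noteq> 0"
  using norm_moment_transform_minus_1_le[OF assms] by auto

lemma norm_of_real_div_diff_le:
  assumes "\<bar>x\<bar> \<le> R" "cmod w \<ge> \<rho>" "\<rho> > R"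
  shows "cmod (complex_of_real x / (w - complex_of_real x)) \<le> R / (\<rho> - R)"
proof -
  have "cmod (w - complex_of_real x) \<ge> \<rho> - R"
    using norm_triangle_ineq2[of w "complex_of_real x"] assms by simp
  then show ?thesis
    unfolding norm_divide using assms by (intro frac_le) auto
qed

lemma norm_mult_cauchy_G_minus_1_le:
  assumes "prob_space M" "sets M = sets borel" and bounded: "AE x in M. \<bar>x\<bar> \<le> R"
    and "cmod w \<ge> \<rho>" "\<rho> > R"
  shows "cmod (w * cauchy_G M w - 1) \<le> R / (\<rho> - R)"
proof -
  have "cmod (w * (1 / (w - complex_of_real x)) - 1) \<le> R / (\<rho> - R)" if "\<bar>x\<bar> \<le> R" for x
  proof -
    have "w - complex_of_real x \<noteq> 0"
      using that assms(4,5) by (auto simp: abs_le_iff)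
    then have "w * (1 / (w - complex_of_real x)) - 1 = complex_of_real x / (w - complex_of_real x)"
      by (simp add: field_simps)
    then show ?thesis using norm_of_real_div_diff_le[OF that assms(4,5)] by simp
  qed
  then have "cmod ((\<integral>x. w * (1 / (w - complex_of_real x)) \<partial>M) - 1) \<le> R / (\<rho> - R)"
    using bounded
    by (intro norm_integral_minus_1_le[OF assms(1)])
       (auto simp: measurable_cong_sets[OF assms(2) refl] elim!: eventually_mono)
  then show ?thesis
    unfolding cauchy_G_def by (simp del: times_divide_eq_right)
qed

lemma cauchy_G_diff_eq:
  assumes "finite_measure M" "sets M = sets borel" "Im w1 > 0" "Im w2 > 0"
  shows "cauchy_G M w2 - cauchy_G M w1
    = (w1 - w2) * (\<integral>x. 1 / ((w1 - complex_of_real x) * (w2 - complex_of_real x)) \<partial>M)"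
proof -
  have "w1 - complex_of_real x \<noteq> 0" "w2 - complex_of_real x \<noteq> 0" for x
    using assms(3,4) by (auto simp: complex_eq_iff)
  then have kernel: "1 / (w2 - complex_of_real x) - 1 / (w1 - complex_of_real x)
      = (w1 - w2) * (1 / ((w1 - complex_of_real x) * (w2 - complex_of_real x)))" for x
    by (simp add: field_simps)
  have "Im w1 \<noteq> 0" "Im w2 \<noteq> 0" using assms(3,4) by auto
  then have "cauchy_G M w2 - cauchy_G M w1
      = (\<integral>x. 1 / (w2 - complex_of_real x) - 1 / (w1 - complex_of_real x) \<partial>M)"
    unfolding cauchy_G_def using integrable_cauchy_kernel[OF assms(1,2)] by simp
  also have "\<dots> = (w1 - w2) * (\<integral>x. 1 / ((w1 - complex_of_real x) * (w2 - complex_of_real x)) \<partial>M)"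
    unfolding kernel by (rule integral_mult_right_zero)
  finally show ?thesis .
qed

lemma norm_kernel_product_minus_1_le:
  assumes "\<bar>x\<bar> \<le> R" "cmod w1 \<ge> \<rho>" "cmod w2 \<ge> \<rho>" "\<rho> > R" "R / (\<rho> - R) \<le> 1"
  shows "cmod (w1 * w2 * (1 / ((w1 - complex_of_real x) * (w2 - complex_of_real x))) - 1)
    \<le> 3 * (R / (\<rho> - R))"
proof -
  define \<epsilon> where "\<epsilon> = R / (\<rho> - R)"
  define a1 where "a1 = complex_of_real x / (w1 - complex_of_real x)"
  define a2 where "a2 = complex_of_real x / (w2 - complex_of_real x)"
  have "\<epsilon> \<ge> 0" using assms(1,4) by (simp add: \<epsilon>_def)
  have "w1 - complex_of_real x \<noteq> 0" "w2 - complex_of_real x \<noteq> 0"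
    using assms(1-4) by (auto simp: abs_le_iff)
  moreover have "(d1 + y) * (d2 + y) * (1 / (d1 * d2)) - 1 = y / d1 + y / d2 + y / d1 * (y / d2)"
    if "d1 \<noteq> 0" "d2 \<noteq> 0" for d1 d2 y :: complex
    using that by (simp add: field_simps)
  ultimately have "w1 * w2 * (1 / ((w1 - complex_of_real x) * (w2 - complex_of_real x))) - 1 = a1 + a2 + a1 * a2"
    unfolding a1_def a2_def by (metis diff_add_cancel)
  moreover have "cmod a1 \<le> \<epsilon>" "cmod a2 \<le> \<epsilon>"
    unfolding a1_def a2_def \<epsilon>_def using assms by (auto intro: norm_of_real_div_diff_le)
  moreover from this have "cmod (a1 * a2) \<le> \<epsilon> * 1"
    unfolding norm_mult using assms(5) \<open>\<epsilon> \<ge> 0\<close> by (intro mult_mono) (auto simp: \<epsilon>_def)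
  ultimately show ?thesis
    using norm_triangle_ineq[of "a1 + a2" "a1 * a2"] norm_triangle_ineq[of a1 a2] by (simp add: \<epsilon>_def)
qed

lemma norm_mult_integral_kernel_product_minus_1_le:
  assumes "prob_space M" "sets M = sets borel" and bounded: "AE x in M. \<bar>x\<bar> \<le> R"
    and "cmod w1 \<ge> \<rho>" "cmod w2 \<ge> \<rho>" "\<rho> > R" "R / (\<rho> - R) \<le> 1"
  shows "cmod (w1 * w2 * (\<integral>x. 1 / ((w1 - complex_of_real x) * (w2 - complex_of_real x)) \<partial>M) - 1)
    \<le> 3 * (R / (\<rho> - R))"
proof -
  have "cmod ((\<integral>x. w1 * w2 * (1 / ((w1 - complex_of_real x) * (w2 - complex_of_real x))) \<partial>M) - 1)
      \<le> 3 * (R / (\<rho> - R))"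
    using bounded norm_kernel_product_minus_1_le[OF _ assms(4-7)]
    by (intro norm_integral_minus_1_le[OF assms(1)])
       (auto simp: measurable_cong_sets[OF assms(2) refl] elim!: eventually_mono)
  then show ?thesis by (simp del: times_divide_eq_right)
qed

lemma norm_quotient_minus_1_le:
  fixes A B1 B2 :: complex
  assumes "cmod (A - 1) \<le> 3 * \<epsilon>" "cmod (B1 - 1) \<le> \<epsilon>" "cmod (B2 - 1) \<le> \<epsilon>" "\<epsilon> \<ge> 0" "\<epsilon> \<le> 1 / 2"
  shows "cmod (A / (B1 * B2) - 1) \<le> 24 * \<epsilon>"
proof -
  have "cmod B1 \<ge> 1 / 2" "cmod B2 \<ge> 1 / 2"
    using norm_triangle_ineq2[of 1 "1 - B1"] norm_triangle_ineq2[of 1 "1 - B2"] assms(2,3,5)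
    by (simp_all add: norm_minus_commute)
  then have "cmod (B1 * B2) \<ge> 1 / 4"
    using mult_mono[of "1 / 2" "cmod B1" "1 / 2" "cmod B2"] by (simp add: norm_mult)
  have "cmod B2 \<le> 1 + \<epsilon>" using norm_triangle_ineq[of "B2 - 1" 1] assms(3) by simp
  have "cmod (B1 * B2 - 1) \<le> cmod ((B1 - 1) * B2) + cmod (B2 - 1)"
    using norm_triangle_ineq[of "(B1 - 1) * B2" "B2 - 1"] by (simp add: algebra_simps)
  also have "\<dots> \<le> \<epsilon> * (1 + \<epsilon>) + \<epsilon>"
    unfolding norm_mult using assms \<open>cmod B2 \<le> 1 + \<epsilon>\<close> by (intro add_mono mult_mono) auto
  also have "\<dots> \<le> 3 * \<epsilon>" using assms(4,5) by (simp add: algebra_simps power2_eq_square mult_right_le_one_le)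
  finally have "cmod (B1 * B2 - 1) \<le> 3 * \<epsilon>" .
  have "B1 * B2 \<noteq> 0" using \<open>cmod (B1 * B2) \<ge> 1 / 4\<close> by auto
  then have "A / (B1 * B2) - 1 = ((A - 1) - (B1 * B2 - 1)) / (B1 * B2)" by (simp add: field_simps)
  also have "cmod \<dots> \<le> (3 * \<epsilon> + 3 * \<epsilon>) / (1 / 4)"
    unfolding norm_divide
    using norm_triangle_ineq4[of "A - 1" "B1 * B2 - 1"] assms(1,4) \<open>cmod (B1 * B2 - 1) \<le> 3 * \<epsilon>\<close>
      \<open>cmod (B1 * B2) \<ge> 1 / 4\<close>
    by (intro frac_le) auto
  finally show ?thesis by simp
qed

lemma norm_cauchy_H_difference_quotient_minus_1_le:
  assumes "prob_space M" "sets M = sets borel" "AE x in M. \<bar>x\<bar> \<le> R" and "R > 0"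
    and "Im w1 > 0" "Im w2 > 0" "w1 \<noteq> w2" "cmod w1 \<ge> \<rho>" "cmod w2 \<ge> \<rho>" "\<rho> \<ge> 3 * R"
  shows "cmod ((cauchy_H M w1 - cauchy_H M w2) / (w1 - w2) - 1) \<le> 24 * (R / (\<rho> - R))"
proof -
  define I where "I = (\<integral>x. 1 / ((w1 - complex_of_real x) * (w2 - complex_of_real x)) \<partial>M)"
  have finite: "finite_measure M" using assms(1) by (simp add: prob_space_def)
  have G_nonzero: "cauchy_G M w1 \<noteq> 0" "cauchy_G M w2 \<noteq> 0"
    using cauchy_G_nonzero[OF assms(1,2)] assms(5,6) by auto
  have "w1 \<noteq> 0" "w2 \<noteq> 0" using assms(5,6) by auto
  have "cauchy_H M w1 - cauchy_H M w2 = (cauchy_G M w2 - cauchy_G M w1) / (cauchy_G M w1 * cauchy_G M w2)"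
    unfolding cauchy_H_def using G_nonzero by (simp add: field_simps)
  also have "\<dots> = (w1 - w2) * I / (cauchy_G M w1 * cauchy_G M w2)"
    using cauchy_G_diff_eq[OF finite assms(2,5,6)] by (simp add: I_def)
  finally have "(cauchy_H M w1 - cauchy_H M w2) / (w1 - w2)
      = (w1 * w2 * I) / ((w1 * cauchy_G M w1) * (w2 * cauchy_G M w2))"
    using assms(7) \<open>w1 \<noteq> 0\<close> \<open>w2 \<noteq> 0\<close> G_nonzero by (simp add: field_simps)
  also have "cmod (\<dots> - 1) \<le> 24 * (R / (\<rho> - R))"
  proof (rule norm_quotient_minus_1_le)
    have "\<rho> > R" "R / (\<rho> - R) \<le> 1 / 2" using assms(4,10) by (simp_all add: field_simps)
    then show "R / (\<rho> - R) \<ge> 0" "R / (\<rho> - R) \<le> 1 / 2"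
      "cmod (w1 * cauchy_G M w1 - 1) \<le> R / (\<rho> - R)" "cmod (w2 * cauchy_G M w2 - 1) \<le> R / (\<rho> - R)"
      using assms(4-9) by (auto intro!: norm_mult_cauchy_G_minus_1_le[OF assms(1-3)])
    show "cmod (w1 * w2 * I - 1) \<le> 3 * (R / (\<rho> - R))"
      unfolding I_def using assms(4-9) \<open>\<rho> > R\<close> \<open>R / (\<rho> - R) \<le> 1 / 2\<close>
      by (intro norm_mult_integral_kernel_product_minus_1_le[OF assms(1-3)]) auto
  qed
  finally show ?thesis .
qed

lemma tendsto_const_div_diff_at_top:
  fixes c :: "nat \<Rightarrow> real"
  assumes "filterlim c at_top sequentially"
  shows "(\<lambda>k. R / (c k - R)) \<longlonglongrightarrow> 0"
proof -
  have "filterlim (\<lambda>k. - R + c k) at_top sequentially"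
    by (rule filterlim_tendsto_add_at_top[OF tendsto_const assms])
  then have "(\<lambda>k. R * inverse (- R + c k)) \<longlonglongrightarrow> R * 0"
    by (intro tendsto_intros tendsto_inverse_0_at_top)
  then show ?thesis by (simp add: divide_inverse)
qed

lemma tendsto_inverse_if_norm_at_top:
  fixes w :: "nat \<Rightarrow> complex"
  assumes "filterlim (\<lambda>k. cmod (w k)) at_top sequentially"
  shows "(\<lambda>k. 1 / w k) \<longlonglongrightarrow> 0"
proof (rule tendsto_norm_zero_cancel)
  show "(\<lambda>k. norm (1 / w k)) \<longlonglongrightarrow> 0"
    using tendsto_inverse_0_at_top[OF assms] by (simp add: norm_divide divide_inverse norm_inverse)
qed

lemma
  assumes "prob_space M" "sets M = sets borel" "AE x in M. \<bar>x\<bar> \<le> R" "R > 0"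
    and "\<And>k. Im (z k) > 0" and z_lim: "filterlim (\<lambda>k. cmod (z k)) at_top sequentially"
  shows tendsto_cauchy_H_div: "(\<lambda>k. cauchy_H M (z k) / z k) \<longlonglongrightarrow> 1"
    and filterlim_norm_cauchy_H: "filterlim (\<lambda>k. cmod (cauchy_H M (z k))) at_top sequentially"
proof -
  have "\<forall>\<^sub>F k in sequentially. cmod (z k) \<ge> 2 * R"
    using z_lim by (simp add: filterlim_at_top)
  then have "\<forall>\<^sub>F k in sequentially. norm (z k * cauchy_G M (z k) - 1) \<le> R / (cmod (z k) - R)"
  proof (rule eventually_mono)
    show "norm (z k * cauchy_G M (z k) - 1) \<le> R / (cmod (z k) - R)" if "cmod (z k) \<ge> 2 * R" for k
      using that \<open>R > 0\<close> by (intro norm_mult_cauchy_G_minus_1_le[OF assms(1-3)]) auto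
  qed
  from Lim_null_comparison[OF this tendsto_const_div_diff_at_top[OF z_lim]]
  have "(\<lambda>k. z k * cauchy_G M (z k)) \<longlonglongrightarrow> 1"
    by (simp add: LIM_zero_iff)
  then have "(\<lambda>k. inverse (z k * cauchy_G M (z k))) \<longlonglongrightarrow> inverse 1"
    by (rule tendsto_inverse) simp
  then show lim: "(\<lambda>k. cauchy_H M (z k) / z k) \<longlonglongrightarrow> 1"
    unfolding cauchy_H_def by (simp add: divide_inverse mult.commute)
  have "filterlim (\<lambda>k. cmod (cauchy_H M (z k) / z k) * cmod (z k)) at_top sequentially"
    by (rule filterlim_tendsto_pos_mult_at_top[OF tendsto_norm[OF lim] _ z_lim]) simp
  moreover have "z k \<noteq> 0" for k using assms(5)[of k] by auto
  ultimately show "filterlim (\<lambda>k. cmod (cauchy_H M (z k))) at_top sequentially"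
    by (simp add: norm_divide)
qed

lemma tendsto_cauchy_H_difference_quotient:
  assumes "prob_space M" "sets M = sets borel" "AE x in M. \<bar>x\<bar> \<le> R" "R > 0"
    and "\<And>k. Im (a k) > 0" "\<And>k. Im (b k) > 0" "\<forall>\<^sub>F k in sequentially. a k \<noteq> b k"
    and a_lim: "filterlim (\<lambda>k. cmod (a k)) at_top sequentially"
    and b_lim: "filterlim (\<lambda>k. cmod (b k)) at_top sequentially"
  shows "(\<lambda>k. (cauchy_H M (a k) - cauchy_H M (b k)) / (a k - b k)) \<longlonglongrightarrow> 1"
proof -
  define \<rho> where "\<rho> k = min (cmod (a k)) (cmod (b k))" for k
  have \<rho>_lim: "filterlim \<rho> at_top sequentially"
    unfolding filterlim_at_top
  proof
    fix Z :: real
    show "\<forall>\<^sub>F k in sequentially. Z \<le> \<rho> k"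
      using a_lim[unfolded filterlim_at_top, rule_format, of Z] b_lim[unfolded filterlim_at_top, rule_format, of Z]
      by eventually_elim (simp add: \<rho>_def)
  qed
  have "\<forall>\<^sub>F k in sequentially. \<rho> k \<ge> 3 * R"
    using \<rho>_lim by (simp add: filterlim_at_top)
  with assms(7) have "\<forall>\<^sub>F k in sequentially.
      norm ((cauchy_H M (a k) - cauchy_H M (b k)) / (a k - b k) - 1) \<le> 24 * (R / (\<rho> k - R))"
  proof eventually_elim
    case (elim k)
    show ?case
      by (rule norm_cauchy_H_difference_quotient_minus_1_le[OF assms(1-4,5,6)]) (use elim in \<open>auto simp: \<rho>_def\<close>)
  qed
  moreover have "(\<lambda>k. 24 * (R / (\<rho> k - R))) \<longlonglongrightarrow> 24 * 0"
    by (intro tendsto_intros tendsto_const_div_diff_at_top \<rho>_lim)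
  ultimately show ?thesis
    using Lim_null_comparison by (force simp: LIM_zero_iff)
qed

lemma tendsto_expansion_ratio:
  fixes E :: "complex \<Rightarrow> complex"
  assumes "isCont E 0" "E 0 \<noteq> 0"
    and a_lim: "filterlim (\<lambda>k. cmod (a k)) at_top sequentially"
    and b_lim: "filterlim (\<lambda>k. cmod (b k)) at_top sequentially"
    and ratio: "(\<lambda>k. b k / a k) \<longlonglongrightarrow> 1"
  shows "(\<lambda>k. (b k * E (1 / b k) * (1 / b k) ^ n) / (a k * E (1 / a k) * (1 / a k) ^ n)) \<longlonglongrightarrow> 1"
proof -
  have "\<forall>\<^sub>F k in sequentially. cmod (a k) \<ge> 1" "\<forall>\<^sub>F k in sequentially. cmod (b k) \<ge> 1"
    using a_lim b_lim by (simp_all add: filterlim_at_top)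
  then have "\<forall>\<^sub>F k in sequentially. a k \<noteq> 0 \<and> b k \<noteq> 0"
    by eventually_elim auto
  moreover have "(\<lambda>k. E (1 / a k)) \<longlonglongrightarrow> E 0" "(\<lambda>k. E (1 / b k)) \<longlonglongrightarrow> E 0"
    using isCont_tendsto_compose[OF assms(1)] tendsto_inverse_if_norm_at_top a_lim b_lim by blast+
  then have "\<forall>\<^sub>F k in sequentially. E (1 / a k) \<noteq> 0"
    using assms(2) tendsto_imp_eventually_ne by blast
  ultimately have eq: "\<forall>\<^sub>F k in sequentially.
      (b k / a k) * (E (1 / b k) / E (1 / a k)) * inverse (b k / a k) ^ n
      = (b k * E (1 / b k) * (1 / b k) ^ n) / (a k * E (1 / a k) * (1 / a k) ^ n)"
    by eventually_elim (simp add: field_simps power_divide)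
  have "(\<lambda>k. (b k / a k) * (E (1 / b k) / E (1 / a k)) * inverse (b k / a k) ^ n)
      \<longlonglongrightarrow> 1 * (E 0 / E 0) * inverse 1 ^ n"
    using \<open>(\<lambda>k. E (1 / a k)) \<longlonglongrightarrow> E 0\<close> \<open>(\<lambda>k. E (1 / b k)) \<longlonglongrightarrow> E 0\<close> assms(2) ratio
    by (intro tendsto_intros) auto
  then show ?thesis
    using Lim_transform_eventually[OF _ eq] assms(2) by simp
qed

section \<open>Uniqueness of monotone square roots\<close>

text \<open>Because \<open>H\<^sub>M(H\<^sub>M z) = H\<^sub>N(H\<^sub>N z)\<close>, this ratio is minus a difference quotient of \<open>H\<^sub>M\<close>
  between the points \<open>H\<^sub>M z\<close> and \<open>H\<^sub>N z\<close>.\<close>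
lemma tendsto_cauchy_H_diff_ratio_if_compose_self_eq:
  assumes M: "prob_space M" "sets M = sets borel" "AE x in M. \<bar>x\<bar> \<le> R"
    and N: "prob_space N" "sets N = sets borel" "AE x in N. \<bar>x\<bar> \<le> R" and "R > 0"
    and compose: "\<And>z. Im z > 0 \<Longrightarrow> cauchy_H M (cauchy_H M z) = cauchy_H N (cauchy_H N z)"
    and Im_z: "\<And>k. Im (z k) > 0" and z_lim: "filterlim (\<lambda>k. cmod (z k)) at_top sequentially"
    and distinct: "\<forall>\<^sub>F k in sequentially. cauchy_H M (z k) \<noteq> cauchy_H N (z k)"
  shows "(\<lambda>k. (cauchy_H M (cauchy_H N (z k)) - cauchy_H N (cauchy_H N (z k)))
      / (cauchy_H M (z k) - cauchy_H N (z k))) \<longlonglongrightarrow> - 1"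
proof -
  have "(\<lambda>k. (cauchy_H M (cauchy_H M (z k)) - cauchy_H M (cauchy_H N (z k)))
      / (cauchy_H M (z k) - cauchy_H N (z k))) \<longlonglongrightarrow> 1"
    by (intro tendsto_cauchy_H_difference_quotient[OF M \<open>R > 0\<close>] Im_cauchy_H_pos[OF M(1,2) Im_z]
        Im_cauchy_H_pos[OF N(1,2) Im_z] filterlim_norm_cauchy_H[OF M \<open>R > 0\<close> Im_z z_lim]
        filterlim_norm_cauchy_H[OF N \<open>R > 0\<close> Im_z z_lim] distinct)
  then have "(\<lambda>k. - ((cauchy_H M (cauchy_H M (z k)) - cauchy_H M (cauchy_H N (z k)))
      / (cauchy_H M (z k) - cauchy_H N (z k)))) \<longlonglongrightarrow> - 1"
    by (intro tendsto_intros)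
  then show ?thesis
    by (simp add: compose[OF Im_z] minus_divide_left)
qed

text \<open>An expansion \<open>H\<^sub>M(w) - H\<^sub>N(w) = w E(1/w) w\<^sup>-\<^sup>n\<close> with \<open>E(0) \<noteq> 0\<close> would make the ratio
  of the previous lemma tend to \<open>+1\<close> along \<open>z\<^sub>k = i(k+1)\<close>.\<close>
lemma expansion_coefficient_zero_if_cauchy_H_compose_self_eq:
  assumes M: "prob_space M" "sets M = sets borel" "AE x in M. \<bar>x\<bar> \<le> R"
    and N: "prob_space N" "sets N = sets borel" "AE x in N. \<bar>x\<bar> \<le> R" and "R > 0"
    and compose: "\<And>z. Im z > 0 \<Longrightarrow> cauchy_H M (cauchy_H M z) = cauchy_H N (cauchy_H N z)"
    and "isCont E 0"
    and expansion: "\<And>w. Im w > 0 \<Longrightarrow> cmod w \<ge> \<rho> \<Longrightarrow> cauchy_H M w - cauchy_H N w = w * E (1 / w) * (1 / w) ^ n"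
  shows "E 0 = 0"
proof (rule ccontr)
  assume "E 0 \<noteq> 0"
  define d where "d w = cauchy_H M w - cauchy_H N w" for w
  define z where "z k = \<i> * complex_of_real (real k + 1)" for k :: nat
  define g where "g k = cauchy_H N (z k)" for k
  have Im_z: "Im (z k) > 0" for k by (simp add: z_def)
  have z_lim: "filterlim (\<lambda>k. cmod (z k)) at_top sequentially"
    unfolding z_def norm_mult norm_of_real
    using filterlim_tendsto_add_at_top[OF tendsto_const[of 1] filterlim_real_sequentially]
    by (simp add: add.commute)
  have g_lim: "filterlim (\<lambda>k. cmod (g k)) at_top sequentially"
    unfolding g_def by (rule filterlim_norm_cauchy_H[OF N \<open>R > 0\<close> Im_z z_lim])
  have "\<forall>\<^sub>F k in sequentially. cmod (z k) \<ge> \<rho>" "\<forall>\<^sub>F k in sequentially. cmod (g k) \<ge> \<rho>"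
    using z_lim g_lim by (simp_all add: filterlim_at_top)
  then have d_eq: "\<forall>\<^sub>F k in sequentially. d (z k) = z k * E (1 / z k) * (1 / z k) ^ n
      \<and> d (g k) = g k * E (1 / g k) * (1 / g k) ^ n"
    by eventually_elim (simp add: d_def g_def expansion Im_z Im_cauchy_H_pos[OF N(1,2) Im_z])
  have "(\<lambda>k. E (1 / z k)) \<longlonglongrightarrow> E 0"
    using isCont_tendsto_compose[OF \<open>isCont E 0\<close> tendsto_inverse_if_norm_at_top[OF z_lim]] .
  then have "\<forall>\<^sub>F k in sequentially. E (1 / z k) \<noteq> 0"
    using \<open>E 0 \<noteq> 0\<close> tendsto_imp_eventually_ne by blast
  with d_eq have "\<forall>\<^sub>F k in sequentially. d (z k) \<noteq> 0"
  proof eventually_elim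
    case (elim k)
    have "z k \<noteq> 0" using Im_z[of k] by auto
    with elim show ?case by simp
  qed
  then have "(\<lambda>k. d (g k) / d (z k)) \<longlonglongrightarrow> - 1"
    unfolding d_def g_def
    by (intro tendsto_cauchy_H_diff_ratio_if_compose_self_eq[OF M N \<open>R > 0\<close> compose Im_z z_lim])
       (auto elim: eventually_mono)
  moreover have "(\<lambda>k. d (g k) / d (z k)) \<longlonglongrightarrow> 1"
  proof (rule Lim_transform_eventually)
    show "(\<lambda>k. (g k * E (1 / g k) * (1 / g k) ^ n) / (z k * E (1 / z k) * (1 / z k) ^ n)) \<longlonglongrightarrow> 1"
      using tendsto_cauchy_H_div[OF N \<open>R > 0\<close> Im_z z_lim]
      by (intro tendsto_expansion_ratio[OF \<open>isCont E 0\<close> \<open>E 0 \<noteq> 0\<close> z_lim g_lim]) (simp add: g_def)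
    show "\<forall>\<^sub>F k in sequentially. (g k * E (1 / g k) * (1 / g k) ^ n) / (z k * E (1 / z k) * (1 / z k) ^ n)
        = d (g k) / d (z k)"
      using d_eq by eventually_elim simp
  qed
  ultimately show False
    using LIMSEQ_unique by fastforce
qed

lemma holomorphic_zero_or_factorization_at_0:
  fixes f :: "complex \<Rightarrow> complex"
  assumes "f holomorphic_on S" "open S" "connected S" "0 \<in> S"
  obtains "\<forall>u\<in>S. f u = 0"
    | r E n where "r > 0" "isCont E 0" "E 0 \<noteq> 0" "\<And>w. w \<in> cball 0 r \<Longrightarrow> f w = E w * w ^ n"
proof (cases "\<forall>u\<in>S. f u = 0")
  case False
  then obtain r where "r > 0" and holomorphic: "zor_poly f 0 holomorphic_on cball 0 r"
    and factor: "\<forall>w\<in>cball 0 r. f w = zor_poly f 0 w * (w - 0) ^ nat (zorder f 0) \<and> zor_poly f 0 w \<noteq> 0"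
    using zorder_exist_zero[OF assms] by blast
  have "isCont (zor_poly f 0) 0"
    by (rule continuous_on_interior[OF holomorphic_on_imp_continuous_on[OF holomorphic]])
       (use \<open>r > 0\<close> in simp)
  with \<open>r > 0\<close> factor show thesis by (intro that(2)) auto
qed

lemma cauchy_H_diff_expansion:
  assumes M: "prob_space M" "sets M = sets borel" "AE x in M. \<bar>x\<bar> \<le> R"
    and N: "prob_space N" "sets N = sets borel" "AE x in N. \<bar>x\<bar> \<le> R" and "R > 0"
  obtains D where "D holomorphic_on ball 0 (1 / (4 * R))"
    and "\<And>w. w \<noteq> 0 \<Longrightarrow> cauchy_H M w - cauchy_H N w = w * D (1 / w)"
proof
  define D where "D u = 1 / moment_transform M u - 1 / moment_transform N u" for u
  have le: "cmod u \<le> 1 / (4 * R)" if "u \<in> ball 0 (1 / (4 * R))" for u using that by simp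
  have "ball 0 (1 / (4 * R)) \<subseteq> ball (0::complex) (1 / (2 * R))" using \<open>R > 0\<close> by (auto simp: field_simps)
  then show "D holomorphic_on ball 0 (1 / (4 * R))"
    unfolding D_def[abs_def]
    using moment_transform_nonzero[OF M \<open>R > 0\<close> le] moment_transform_nonzero[OF N \<open>R > 0\<close> le]
    by (intro holomorphic_intros holomorphic_on_subset[OF moment_transform_holomorphic[OF M \<open>R > 0\<close>]]
        holomorphic_on_subset[OF moment_transform_holomorphic[OF N \<open>R > 0\<close>]]) auto
  show "cauchy_H M w - cauchy_H N w = w * D (1 / w)" if "w \<noteq> 0" for w
    unfolding cauchy_H_eq_moment_transform[OF that] D_def by (simp add: divide_inverse algebra_simps)
qed

lemma measure_eq_if_cauchy_H_compose_self_eq: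
  assumes M: "prob_space M" "sets M = sets borel" "AE x in M. \<bar>x\<bar> \<le> R"
    and N: "prob_space N" "sets N = sets borel" "AE x in N. \<bar>x\<bar> \<le> R" and "R > 0"
    and compose: "\<And>z. Im z > 0 \<Longrightarrow> cauchy_H M (cauchy_H M z) = cauchy_H N (cauchy_H N z)"
  shows "M = N"
proof -
  obtain D where D_holomorphic: "D holomorphic_on ball 0 (1 / (4 * R))"
    and H_diff: "\<And>w. w \<noteq> 0 \<Longrightarrow> cauchy_H M w - cauchy_H N w = w * D (1 / w)"
    using cauchy_H_diff_expansion[OF M N \<open>R > 0\<close>] by blast
  have "0 \<in> ball (0::complex) (1 / (4 * R))" using \<open>R > 0\<close> by simp
  then consider (vanishing) "\<forall>u\<in>ball 0 (1 / (4 * R)). D u = 0"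
    | (factorization) r E n where "r > 0" "isCont E 0" "E 0 \<noteq> 0" "\<And>w. w \<in> cball 0 r \<Longrightarrow> D w = E w * w ^ n"
    by (rule holomorphic_zero_or_factorization_at_0[OF D_holomorphic open_ball connected_ball]) auto
  then show ?thesis
  proof cases
    case vanishing
    then have D_zero: "D u = 0" if "u \<in> ball 0 (1 / (4 * R))" for u using that by blast
    have "cauchy_H M z = cauchy_H N z" if "Im z > 4 * R" for z
    proof -
      have z: "4 * R < cmod z" "0 < cmod z" using abs_Im_le_cmod[of z] that \<open>R > 0\<close> by auto
      then have "1 / cmod z < 1 / (4 * R)" using \<open>R > 0\<close> by (intro divide_strict_left_mono) simp_all
      then have "1 / z \<in> ball 0 (1 / (4 * R))" by (simp add: norm_divide)
      then show ?thesis using H_diff[of z] D_zero z(2) by auto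
    qed
    then show ?thesis
      using M N by (intro measure_eq_if_cauchy_H_eq_above) (auto simp: prob_space_def)
  next
    case (factorization r E n)
    have "cauchy_H M w - cauchy_H N w = w * E (1 / w) * (1 / w) ^ n" if "Im w > 0" "cmod w \<ge> 1 / r" for w
    proof -
      have "w \<noteq> 0" using that by auto
      have "1 / cmod w \<le> 1 / (1 / r)"
        using that \<open>r > 0\<close> \<open>w \<noteq> 0\<close> by (intro divide_left_mono) auto
      then have "1 / w \<in> cball 0 r" using \<open>r > 0\<close> by (simp add: norm_divide)
      then show ?thesis using H_diff[OF \<open>w \<noteq> 0\<close>] factorization(4) by (simp add: mult.assoc)
    qed
    with factorization(2,3) show ?thesis
      using expansion_coefficient_zero_if_cauchy_H_compose_self_eq[OF M N \<open>R > 0\<close> compose] by blast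
  qed
qed

lemma symmetric_measure_if_double_symmetric:
  assumes sg: "monotone_conv_semigroup \<mu>" and "s \<ge> 0"
    and "compact (measure_support (\<mu> s))" and "symmetric_measure (\<mu> (s + s))"
  shows "symmetric_measure (\<mu> s)"
proof -
  note prob = monotone_conv_semigroupD[OF sg \<open>s \<ge> 0\<close>]
  obtain R where "R > 0" and bounded: "AE x in \<mu> s. \<bar>x\<bar> \<le> R"
    using AE_abs_le_if_compact_support[OF prob(2) assms(3)] by blast
  have "cauchy_H (\<mu> s) (cauchy_H (\<mu> s) z)
      = cauchy_H (reflect_measure (\<mu> s)) (cauchy_H (reflect_measure (\<mu> s)) z)" if "Im z > 0" for z
  proof -
    have "Im (- cnj z) > 0" using that by simp
    have "cauchy_H (\<mu> s) (cauchy_H (\<mu> s) z) = cauchy_H (\<mu> (s + s)) z"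
      using cauchy_H_semigroup_double[OF sg \<open>s \<ge> 0\<close> that] ..
    also have "\<dots> = - cnj (cauchy_H (\<mu> (s + s)) (- cnj z))"
      using cauchy_H_symmetric_measure[OF assms(4) monotone_conv_semigroupD(2)[OF sg], of "- cnj z"] \<open>s \<ge> 0\<close>
      by simp
    also have "\<dots> = - cnj (cauchy_H (\<mu> s) (cauchy_H (\<mu> s) (- cnj z)))"
      using cauchy_H_semigroup_double[OF sg \<open>s \<ge> 0\<close> \<open>Im (- cnj z) > 0\<close>] by simp
    finally show ?thesis by (simp add: cauchy_H_reflect_measure[OF prob(2)])
  qed
  then have "\<mu> s = reflect_measure (\<mu> s)"
    using prob \<open>R > 0\<close> bounded
    by (intro measure_eq_if_cauchy_H_compose_self_eq prob_space_reflect_measure sets_reflect_measure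
        AE_reflect_measure_abs_le)
  then show ?thesis
    using symmetric_measure_iff_reflect_eq[OF prob(2)] by simp
qed

lemma symmetric_measure_semigroup_halves:
  assumes "monotone_conv_semigroup \<mu>" "\<forall>t\<ge>0. compact (measure_support (\<mu> t))"
    and "t0 \<ge> 0" "symmetric_measure (\<mu> t0)"
  shows "symmetric_measure (\<mu> (t0 / 2 ^ n))"
proof (induction n)
  case (Suc n)
  have "t0 / 2 ^ Suc n \<ge> 0" using assms(3) by simp
  moreover have "t0 / 2 ^ Suc n + t0 / 2 ^ Suc n = t0 / 2 ^ n" by simp
  ultimately show ?case
    using symmetric_measure_if_double_symmetric[OF assms(1), of "t0 / 2 ^ Suc n"] assms(2) Suc.IH by metis
qed (use assms(4) in simp)

theorem theorem6p6:
  fixes \<mu> :: "real \<Rightarrow> real measure" and \<gamma> :: real and \<tau> :: "real measure"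
  assumes "monotone_conv_semigroup \<mu>"
    and "\<mu> 0 = return borel 0"
    and "associated_pair \<mu> \<gamma> \<tau>"
    and "\<forall>t\<ge>0. compact (measure_support (\<mu> t))"
  shows "((\<exists>t0>0. symmetric_measure (\<mu> t0)) \<longleftrightarrow> (\<forall>t>0. symmetric_measure (\<mu> t)))
       \<and> ((\<forall>t>0. symmetric_measure (\<mu> t)) \<longleftrightarrow> (\<gamma> = 0 \<and> symmetric_measure \<tau>))"
proof -
  note sg = assms(1) and ap = assms(3)
  have all_iff_commutes: "(\<forall>t>0. symmetric_measure (\<mu> t)) \<longleftrightarrow> commutes_with_reflection (gen_A \<gamma> \<tau>)"
  proof
    assume "\<forall>t>0. symmetric_measure (\<mu> t)"
    then show "commutes_with_reflection (gen_A \<gamma> \<tau>)"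
      by (intro gen_A_commutes_with_reflection_if_symmetric_seq[OF sg ap LIMSEQ_inverse_real_of_nat]) simp_all
  next
    assume "commutes_with_reflection (gen_A \<gamma> \<tau>)"
    then show "\<forall>t>0. symmetric_measure (\<mu> t)"
      using symmetric_measure_if_gen_A_commutes_with_reflection[OF sg ap] by simp
  qed
  have commutes_if_one: "commutes_with_reflection (gen_A \<gamma> \<tau>)" if "t0 > 0" "symmetric_measure (\<mu> t0)" for t0
    using symmetric_measure_semigroup_halves[OF sg assms(4) less_imp_le that(2)] that(1)
    by (intro gen_A_commutes_with_reflection_if_symmetric_seq[OF sg ap, of "\<lambda>n. t0 / 2 ^ n"]
        LIMSEQ_divide_realpow_zero) simp_all
  have commutes_iff: "commutes_with_reflection (gen_A \<gamma> \<tau>) \<longleftrightarrow> \<gamma> = 0 \<and> symmetric_measure \<tau>"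
    by (rule gen_A_commutes_with_reflection_iff[OF associated_pairD(1,2)[OF ap]])
  show ?thesis
  proof (intro conjI iffI)
    assume "\<exists>t0>0. symmetric_measure (\<mu> t0)"
    then show "\<forall>t>0. symmetric_measure (\<mu> t)" using commutes_if_one all_iff_commutes by blast
  next
    assume "\<forall>t>0. symmetric_measure (\<mu> t)"
    then show "\<exists>t0>0. symmetric_measure (\<mu> t0)" by (intro exI[of _ 1]) simp
  qed (use all_iff_commutes commutes_iff in simp_all)
qed
end
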